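(* Let $\Sigma$ be a signed graph and let $\mathrm{acyc}_\Sigma(k)$ be the number of acyclic orientations of $\Sigma$ with exactly $k$ sinks. Then $X_\Sigma\in\mathbb{Y}$ and $\phi(X_\Sigma)=\sum_{k\ge0}\mathrm{acyc}_\Sigma(k)t^k$.
   Context: A signed graph $\Sigma$ is a finite graph (loops and multiple edges allowed) with $\mathrm{sgn}:E(\Sigma)\to\{+,-\}$; write $e:uv$ if $e$ has endpoints $u,v$. A coloring $\kappa:V(\Sigma)\to\mathbb{Z}$ is proper if $\kappa(u)\ne\mathrm{sgn}(e)\kappa(v)$ for every edge $e:uv$; $X_\Sigma=\sum_{\kappa\text{ proper}}\prod_{v}x_{\kappa(v)}$ in variables $x_i$, $i\in\mathbb{Z}$. An orientation assigns to each half-edge (a loop has two) an arrow toward or away from the vertex, such that on a positive edge exactly one of the two arrows points toward its vertex and on a negative edge both point toward or both point away. A cycle is a closed walk in which, considering only the edges of the walk, every vertex of the walk has at least one arrow pointing into it and one pointing out of it; an orientation is acyclic if it has no cycle; a sink is a vertex all of whose incident arrows point toward it (an isolated vertex is a sink). A signed poset is an acyclic orientation $P$ of a signed graph. A proper coloring $\kappa$ preserves $P$ if for every edge $e$ and each endpoint $v$ of $e$, with $u$ the other endpoint ($u=v$ for a loop), the arrow of $P$ at the incidence of $e$ with $v$ points toward $v$ iff $\kappa(v)>\mathrm{sgn}(e)\kappa(u)$. $Y_P=\sum_\kappa\prod_v x_{\kappa(v)}$ over proper colorings preserving $P$; $\mathbb{Y}$ is the $\mathbb{Q}$-span of all $Y_P$.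 $\phi:\mathbb{Y}\to\mathbb{Q}[t]$ is the (unique) $\mathbb{Q}$-linear map with $\phi(Y_P)=t^{\mathrm{sink}(P)}$ for every signed poset $P$ (its existence is established in the paper). *)

theory Defs
  imports Main "HOL-Library.Multiset" "HOL-Computational_Algebra.Polynomial"
begin

text \<open>A signed graph: finite vertex set, finite edge set (multiple edges and loops
allowed via edge identifiers), each edge has an (ordered) pair of endpoints
(a loop has equal endpoints) and a sign (True = positive, False = negative).
The two half-edges of an edge e are indexed by a boolean h: the half-edge at
endp G e True = fst (ends G e) and the one at endp G e False = snd (ends G e).\<close>

record ('v, 'e) sgraph =
  verts :: "'v set"
  edges :: "'e set"
  ends  :: "'e \<Rightarrow> 'v \<times> 'v"
  pos   :: "'e \<Rightarrow> bool"

definition wf_sgraph :: "('v, 'e) sgraph \<Rightarrow> bool" where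
  "wf_sgraph G \<longleftrightarrow> finite (verts G) \<and> finite (edges G) \<and>
     (\<forall>e\<in>edges G. fst (ends G e) \<in> verts G \<and> snd (ends G e) \<in> verts G)"

definition endp :: "('v, 'e) sgraph \<Rightarrow> 'e \<Rightarrow> bool \<Rightarrow> 'v" where
  "endp G e h = (if h then fst (ends G e) else snd (ends G e))"

definition sgnmul :: "('v, 'e) sgraph \<Rightarrow> 'e \<Rightarrow> int \<Rightarrow> int" where
  "sgnmul G e x = (if pos G e then x else - x)"

text \<open>An orientation: om e h = True iff the arrow at half-edge h of e points toward
its vertex. Values outside the edge set are fixed to False (canonical form), so
that orientations can be counted.\<close>

definition is_orientation :: "('v, 'e) sgraph \<Rightarrow> ('e \<Rightarrow> bool \<Rightarrow> bool) \<Rightarrow> bool" where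
  "is_orientation G om \<longleftrightarrow>
     (\<forall>e\<in>edges G. (pos G e \<longrightarrow> om e True \<noteq> om e False) \<and>
                   (\<not> pos G e \<longrightarrow> om e True = om e False)) \<and>
     (\<forall>e. e \<notin> edges G \<longrightarrow> om e = (\<lambda>_. False))"

definition closed_walk :: "('v, 'e) sgraph \<Rightarrow> 'v list \<Rightarrow> 'e list \<Rightarrow> bool" where
  "closed_walk G vs es \<longleftrightarrow> length vs = length es \<and> es \<noteq> [] \<and> set es \<subseteq> edges G \<and>
     (\<forall>i<length es. ends G (es ! i) = (vs ! i, vs ! (Suc i mod length es)) \<or>
                     ends G (es ! i) = (vs ! (Suc i mod length es), vs ! i))"

definition is_cycle :: "('v, 'e) sgraph \<Rightarrow> ('e \<Rightarrow> bool \<Rightarrow> bool) \<Rightarrow> 'v list \<Rightarrow> 'e list \<Rightarrow> bool" where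
  "is_cycle G om vs es \<longleftrightarrow> closed_walk G vs es \<and>
     (\<forall>w\<in>set vs. (\<exists>e\<in>set es. \<exists>h. endp G e h = w \<and> om e h) \<and>
                 (\<exists>e\<in>set es. \<exists>h. endp G e h = w \<and> \<not> om e h))"

definition acyclic_orientation :: "('v, 'e) sgraph \<Rightarrow> ('e \<Rightarrow> bool \<Rightarrow> bool) \<Rightarrow> bool" where
  "acyclic_orientation G om \<longleftrightarrow> is_orientation G om \<and> \<not> (\<exists>vs es. is_cycle G om vs es)"

definition signed_poset :: "('v, 'e) sgraph \<Rightarrow> ('e \<Rightarrow> bool \<Rightarrow> bool) \<Rightarrow> bool" where
  "signed_poset G om \<longleftrightarrow> wf_sgraph G \<and> acyclic_orientation G om"

definition sinks :: "('v, 'e) sgraph \<Rightarrow> ('e \<Rightarrow> bool \<Rightarrow> bool) \<Rightarrow> 'v set" where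
  "sinks G om = {v \<in> verts G. \<forall>e\<in>edges G. \<forall>h. endp G e h = v \<longrightarrow> om e h}"

definition acyc :: "('v, 'e) sgraph \<Rightarrow> nat \<Rightarrow> nat" where
  "acyc G k = card {om. acyclic_orientation G om \<and> card (sinks G om) = k}"

definition proper :: "('v, 'e) sgraph \<Rightarrow> ('v \<Rightarrow> int) \<Rightarrow> bool" where
  "proper G \<kappa> \<longleftrightarrow> (\<forall>v. v \<notin> verts G \<longrightarrow> \<kappa> v = 0) \<and>
     (\<forall>e\<in>edges G. \<kappa> (fst (ends G e)) \<noteq> sgnmul G e (\<kappa> (snd (ends G e))))"

definition preserves :: "('v, 'e) sgraph \<Rightarrow> ('e \<Rightarrow> bool \<Rightarrow> bool) \<Rightarrow> ('v \<Rightarrow> int) \<Rightarrow> bool" where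
  "preserves G om \<kappa> \<longleftrightarrow>
     (\<forall>e\<in>edges G. \<forall>h. om e h \<longleftrightarrow> \<kappa> (endp G e h) > sgnmul G e (\<kappa> (endp G e (\<not> h))))"

text \<open>Formal series in the variables x_i (i \<in> \<int>) are represented by their
coefficient functions on monomials; a monomial prod_v x_{kappa v} is the multiset
of colors image_mset kappa (mset_set V).\<close>

type_synonym series = "int multiset \<Rightarrow> rat"

definition monomial_of :: "('v, 'e) sgraph \<Rightarrow> ('v \<Rightarrow> int) \<Rightarrow> int multiset" where
  "monomial_of G \<kappa> = image_mset \<kappa> (mset_set (verts G))"

definition Xfun :: "('v, 'e) sgraph \<Rightarrow> series" where
  "Xfun G m = of_nat (card {\<kappa>. proper G \<kappa> \<and> monomial_of G \<kappa> = m})"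

definition Yfun :: "('v, 'e) sgraph \<Rightarrow> ('e \<Rightarrow> bool \<Rightarrow> bool) \<Rightarrow> series" where
  "Yfun G om m = of_nat (card {\<kappa>. proper G \<kappa> \<and> preserves G om \<kappa> \<and> monomial_of G \<kappa> = m})"

text \<open>Q-linear combinations of Y_P. Every signed poset is isomorphic to one with
vertices and edge labels in nat, so posets over nat suffice to span \<Y>.\<close>

type_synonym poset_term = "rat \<times> (nat, nat) sgraph \<times> (nat \<Rightarrow> bool \<Rightarrow> bool)"

definition is_rep :: "series \<Rightarrow> poset_term list \<Rightarrow> bool" where
  "is_rep f reps \<longleftrightarrow> (\<forall>(c, G, om) \<in> set reps. signed_poset G om) \<and>
     f = (\<lambda>m. \<Sum>(c, G, om) \<leftarrow> reps. c * Yfun G om m)"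

definition YY :: "series set" where
  "YY = {f. \<exists>reps. is_rep f reps}"

text \<open>phi: the Q-linear map with phi(Y_P) = t^sink(P); its value on f \<in> \<Y> is
the value sum c_i t^sink(P_i) common to all representations f = sum c_i Y_{P_i}.\<close>

definition phi :: "series \<Rightarrow> rat poly" where
  "phi f = (THE q. \<forall>reps. is_rep f reps \<longrightarrow>
      q = (\<Sum>(c, G, om) \<leftarrow> reps. monom c (card (sinks G om))))"

end

(*
  For every degree n there is an explicit linear functional Phi n on formal series, a
  weighted sum of the coefficients of the monomials of degree n, with Phi n (Y_P) equal to
  t^sink(P) if P has n vertices and 0 otherwise. Hence for any representation
  X = sum_i c_i Y_(P_i) the value sum_i c_i t^sink(P_i) equals sum_(n <= N) Phi n (X), so
  phi(X) is well defined; X itself is the sum of Y_P over the acyclic orientations P of the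
  graph, because a proper coloring preserves exactly the orientation it induces.

  Phi n (Y_P) is computed on packed colorings, whose absolute values fill an interval
  {1..L}. The vertices of absolute value L form a set S of sinks (colored L) and a disjoint
  set B of sources (colored -L); removing them leaves a packed coloring of level L - 1.
  Inclusion-exclusion over the pairs (S, B) shows that the packed colorings preserving P
  on a vertex set U, counted with sign (-1)^L, sum to (-1)^|U|: in an acyclic orientation
  with an edge the sinks cannot coincide with the sources.
*)

theory Submission
  imports Defs
begin

lemma funpow_periodic_orbit:
  assumes "finite A" "f ` A \<subseteq> A" "x \<in> A"
  obtains k i where "0 < k" "\<And>m. m < k \<Longrightarrow> (f ^^ (i + Suc m mod k)) x = f ((f ^^ (i + m)) x)"
proof -
  have "(f ^^ i) x \<in> A" for i
    by (induction i) (use assms in auto)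
  hence "\<not> inj_on (\<lambda>i. (f ^^ i) x) {..card A}"
    using card_inj_on_le[OF _ _ assms(1), of "\<lambda>i. (f ^^ i) x" "{..card A}"] by auto
  then obtain i j where ij: "i < j" "(f ^^ i) x = (f ^^ j) x"
    unfolding inj_on_def by (metis linorder_neqE_nat)
  have "(f ^^ (i + Suc m mod (j - i))) x = f ((f ^^ (i + m)) x)" if "m < j - i" for m
  proof (cases "Suc m < j - i")
    case True
    thus ?thesis by simp
  next
    case False
    hence period: "Suc m = j - i" using that by simp
    hence "j = Suc (i + m)" using ij(1) by arith
    hence "(f ^^ j) x = f ((f ^^ (i + m)) x)" by simp
    moreover have "(f ^^ (i + Suc m mod (j - i))) x = (f ^^ j) x"
      using period ij(2) by simp
    ultimately show ?thesis by simp
  qed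
  moreover have "0 < j - i" using ij(1) by simp
  ultimately show ?thesis using that by blast
qed

lemma sum_power_card_Pow:
  fixes x :: "'a :: comm_ring_1"
  assumes "finite A"
  shows "(\<Sum>X\<in>Pow A. x ^ card X) = (x + 1) ^ card A"
  using prod_add[OF assms, of "\<lambda>_. x" "\<lambda>_. 1"] by simp

definition disjoint_subset_pairs :: "'a set \<Rightarrow> 'a set \<Rightarrow> ('a set \<times> 'a set) set" where
  "disjoint_subset_pairs X Y = {(S, B). S \<subseteq> X \<and> B \<subseteq> Y \<and> S \<inter> B = {}}"

lemma finite_disjoint_subset_pairs:
  "finite X \<Longrightarrow> finite Y \<Longrightarrow> finite (disjoint_subset_pairs X Y)"
  by (rule finite_subset[of _ "Pow X \<times> Pow Y"]) (auto simp: disjoint_subset_pairs_def)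

lemma sum_sign_supersets:
  assumes X: "finite X" and Y: "finite Y"
  shows "(\<Sum>S\<in>{S\<in>Pow X. Y \<subseteq> S}. (-1::int) ^ card S) = (if X = Y then (-1) ^ card X else 0)"
proof (cases "Y \<subseteq> X")
  case True
  have image: "{S\<in>Pow X. Y \<subseteq> S} = (\<lambda>T. Y \<union> T) ` Pow (X - Y)"
  proof (intro equalityI subsetI)
    fix S assume "S \<in> {S\<in>Pow X. Y \<subseteq> S}"
    hence "S = Y \<union> (S - Y)" "S - Y \<in> Pow (X - Y)" by auto
    thus "S \<in> (\<lambda>T. Y \<union> T) ` Pow (X - Y)" by (rule image_eqI)
  qed (use True in auto)
  have inj: "inj_on (\<lambda>T. Y \<union> T) (Pow (X - Y))"
    by (auto simp: inj_on_def)
  have card_Un: "card (Y \<union> T) = card Y + card T" if "T \<in> Pow (X - Y)" for T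
    using that X Y by (intro card_Un_disjoint) (auto intro: finite_subset)
  have "(\<Sum>S\<in>{S\<in>Pow X. Y \<subseteq> S}. (-1::int) ^ card S) = (\<Sum>T\<in>Pow (X - Y). (-1) ^ card (Y \<union> T))"
    unfolding image by (rule sum.reindex[OF inj, unfolded comp_def])
  also have "\<dots> = (-1) ^ card Y * (\<Sum>T\<in>Pow (X - Y). (-1) ^ card T)"
    unfolding sum_distrib_left by (intro sum.cong refl) (simp add: card_Un power_add)
  also have "\<dots> = (-1) ^ card Y * 0 ^ card (X - Y)"
    using X by (simp add: sum_power_card_Pow)
  also have "\<dots> = (if X = Y then (-1) ^ card X else 0)"
  proof (cases "X = Y")
    case False
    hence "card (X - Y) \<noteq> 0" using X True by (simp add: card_eq_0_iff)
    thus ?thesis using False by simp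
  qed simp
  finally show ?thesis .
next
  case False
  hence "{S\<in>Pow X. Y \<subseteq> S} = {}" by blast
  moreover have "X \<noteq> Y" using False by blast
  ultimately show ?thesis by (simp only: sum.empty if_False)
qed

lemma sum_sign_disjoint_subset_pairs:
  assumes X: "finite X" and Y: "finite Y"
  shows "(\<Sum>(S, B)\<in>disjoint_subset_pairs X Y. (-1::int) ^ (card S + card B)) =
    (if X = Y then (-1) ^ card X else 0)"
proof -
  have pairs: "disjoint_subset_pairs X Y = Sigma (Pow X) (\<lambda>S. Pow (Y - S))"
    by (auto simp: disjoint_subset_pairs_def)
  have "(\<Sum>(S, B)\<in>disjoint_subset_pairs X Y. (-1::int) ^ (card S + card B)) =
      (\<Sum>S\<in>Pow X. (-1) ^ card S * (\<Sum>B\<in>Pow (Y - S). (-1) ^ card B))"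
    unfolding pairs using X Y
    by (subst sum.Sigma[symmetric]) (auto simp: power_add sum_distrib_left intro: finite_subset)
  also have "\<dots> = (\<Sum>S\<in>Pow X. if Y \<subseteq> S then (-1) ^ card S else 0)"
    using Y by (intro sum.cong) (auto simp: sum_power_card_Pow power_0_left)
  also have "\<dots> = (\<Sum>S\<in>{S\<in>Pow X. Y \<subseteq> S}. (-1) ^ card S)"
    by (rule sum.inter_filter[symmetric]) (use X in simp)
  finally show ?thesis
    using sum_sign_supersets[OF X Y] by simp
qed

lemma smult_sum_right: "smult c (\<Sum>i\<in>A. f i) = (\<Sum>i\<in>A. smult c (f i))"
  by (induction A rule: infinite_finite_induct) (simp_all add: smult_add_right)

section \<open>Sinks and sources of acyclic orientations\<close>

lemma endp_True [simp]: "endp G e True = fst (ends G e)"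
  and endp_False [simp]: "endp G e False = snd (ends G e)"
  by (simp_all add: endp_def)

lemma orientation_other_half:
  assumes "is_orientation G om" "e \<in> edges G"
  shows "om e (\<not> h) = (if pos G e then \<not> om e h else om e h)"
  using assms unfolding is_orientation_def by (cases h) auto

lemma closed_walk_endp:
  assumes "closed_walk G vs es" "e \<in> set es"
  shows "endp G e h \<in> set vs"
proof -
  obtain i where i: "i < length es" "e = es ! i" using assms(2) by (auto simp: in_set_conv_nth)
  have "length vs = length es" using assms(1) by (simp add: closed_walk_def)
  moreover have "0 < length es" using i(1) by linarith
  hence "Suc i mod length es < length es" by (rule mod_less_divisor)
  ultimately have "vs ! i \<in> set vs" "vs ! (Suc i mod length es) \<in> set vs"
    using i(1) by auto
  moreover have "ends G e = (vs ! i, vs ! (Suc i mod length es)) \<or> ends G e = (vs ! (Suc i mod length es), vs ! i)"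
    using assms(1) i unfolding closed_walk_def by blast
  ultimately show ?thesis by (cases h) auto
qed

definition induced_edges :: "('v, 'e) sgraph \<Rightarrow> 'v set \<Rightarrow> 'e set" where
  "induced_edges G U = {e \<in> edges G. fst (ends G e) \<in> U \<and> snd (ends G e) \<in> U}"

lemma endp_in_induced: "e \<in> induced_edges G U \<Longrightarrow> endp G e h \<in> U"
  by (cases h) (auto simp: induced_edges_def)

lemma induced_edges_verts: "wf_sgraph G \<Longrightarrow> induced_edges G (verts G) = edges G"
  by (auto simp: induced_edges_def wf_sgraph_def)

definition sinks_on :: "('v, 'e) sgraph \<Rightarrow> ('e \<Rightarrow> bool \<Rightarrow> bool) \<Rightarrow> 'v set \<Rightarrow> 'v set" where
  "sinks_on G om U = {v \<in> U. \<forall>e\<in>induced_edges G U. \<forall>h. endp G e h = v \<longrightarrow> om e h}"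

definition sources_on :: "('v, 'e) sgraph \<Rightarrow> ('e \<Rightarrow> bool \<Rightarrow> bool) \<Rightarrow> 'v set \<Rightarrow> 'v set" where
  "sources_on G om U = {v \<in> U. \<forall>e\<in>induced_edges G U. \<forall>h. endp G e h = v \<longrightarrow> \<not> om e h}"

lemma sinks_on_verts: "wf_sgraph G \<Longrightarrow> sinks_on G om (verts G) = sinks G om"
  by (simp add: sinks_on_def sinks_def induced_edges_verts)

lemma alternating_closed_trail_is_cycle:
  assumes "0 < k"
    and trail: "\<And>m. m < k \<Longrightarrow> e m \<in> edges G \<and>
      endp G (e m) (\<not> h m) = endp G (e (Suc m mod k)) (h (Suc m mod k))"
    and alternating: "\<And>m. m < k \<Longrightarrow> om (e m) (\<not> h m) \<noteq> om (e (Suc m mod k)) (h (Suc m mod k))"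
  shows "is_cycle G om (map (\<lambda>m. endp G (e m) (h m)) [0..<k]) (map e [0..<k])"
  unfolding is_cycle_def
proof (intro conjI ballI)
  let ?vs = "map (\<lambda>m. endp G (e m) (h m)) [0..<k]" and ?es = "map e [0..<k]"
  show "closed_walk G ?vs ?es"
    unfolding closed_walk_def
  proof (intro conjI allI impI)
    fix m assume "m < length ?es"
    hence m: "m < k" by simp
    have "Suc m mod k < k" using \<open>0 < k\<close> by simp
    with trail[OF m] m show "ends G (?es ! m) = (?vs ! m, ?vs ! (Suc m mod length ?es)) \<or>
        ends G (?es ! m) = (?vs ! (Suc m mod length ?es), ?vs ! m)"
      by (cases "h m") (auto simp: prod_eq_iff)
  qed (use \<open>0 < k\<close> trail in auto)
next
  fix w assume "w \<in> set (map (\<lambda>m. endp G (e m) (h m)) [0..<k])"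
  then obtain j where j: "j < k" "w = endp G (e j) (h j)" by auto
  obtain m where m: "m < k" "Suc m mod k = j"
  proof (cases j)
    case 0 thus ?thesis using that[of "k - 1"] \<open>0 < k\<close> by simp
  next
    case (Suc i) thus ?thesis using that[of i] j by simp
  qed
  have "e m \<in> set (map e [0..<k])" "e j \<in> set (map e [0..<k])" using m j by auto
  moreover have "endp G (e m) (\<not> h m) = w" using trail[OF m(1)] m j by simp
  moreover note alternating[OF m(1)]
  ultimately show "\<exists>e'\<in>set (map e [0..<k]). \<exists>h'. endp G e' h' = w \<and> om e' h'"
    and "\<exists>e'\<in>set (map e [0..<k]). \<exists>h'. endp G e' h' = w \<and> \<not> om e' h'"
    using j(2) m(2) by (cases "om (e j) (h j)"; metis)+
qed

lemma opposite_arrow_if_sinks_on_eq_sources_on: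
  assumes eq: "sinks_on G om U = sources_on G om U" and e: "e \<in> induced_edges G U"
  obtains e' h' where "e' \<in> induced_edges G U" "endp G e' h' = endp G e h" "om e' h' \<noteq> om e h"
proof -
  let ?w = "endp G e h"
  have "?w \<notin> sinks_on G om U \<inter> sources_on G om U"
    using e by (auto simp: sinks_on_def sources_on_def)
  hence "?w \<notin> sinks_on G om U" "?w \<notin> sources_on G om U" using eq by auto
  hence "\<exists>e'\<in>induced_edges G U. \<exists>h'. endp G e' h' = ?w \<and> om e' h' = b" for b
    using endp_in_induced[OF e] by (cases b) (auto simp: sinks_on_def sources_on_def)
  with that show ?thesis by blast
qed

text \<open>If sinks and sources coincided, one could walk forever, always leaving a vertex through
  an arrow opposite to the one of arrival; by finiteness such a walk closes up into a cycle.\<close>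

lemma acyclic_sinks_on_ne_sources_on:
  assumes wf: "wf_sgraph G" and ac: "acyclic_orientation G om"
    and edge: "induced_edges G U \<noteq> {}"
  shows "sinks_on G om U \<noteq> sources_on G om U"
proof
  assume eq: "sinks_on G om U = sources_on G om U"
  let ?H = "induced_edges G U \<times> (UNIV :: bool set)"
  have "\<exists>s'\<in>?H. endp G (fst s') (snd s') = endp G (fst s) (\<not> snd s) \<and>
                 om (fst s') (snd s') \<noteq> om (fst s) (\<not> snd s)" if sH: "s \<in> ?H" for s
  proof -
    obtain e h where s: "s = (e, h)" and e: "e \<in> induced_edges G U"
      using sH by (cases s) auto
    obtain e' h' where "e' \<in> induced_edges G U" "endp G e' h' = endp G e (\<not> h)" "om e' h' \<noteq> om e (\<not> h)"
      using opposite_arrow_if_sinks_on_eq_sources_on[OF eq e] .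
    thus ?thesis unfolding s by force
  qed
  then obtain succ where succ: "\<And>s. s \<in> ?H \<Longrightarrow> succ s \<in> ?H \<and>
      endp G (fst (succ s)) (snd (succ s)) = endp G (fst s) (\<not> snd s) \<and>
      om (fst (succ s)) (snd (succ s)) \<noteq> om (fst s) (\<not> snd s)"
    by metis
  obtain e0 where e0: "e0 \<in> induced_edges G U" using edge by blast
  have "finite ?H"
    using wf by (auto simp: wf_sgraph_def induced_edges_def)
  moreover have "succ ` ?H \<subseteq> ?H" using succ by blast
  moreover have "(e0, True) \<in> ?H" using e0 by simp
  ultimately obtain k i where k: "0 < k" and
    next_state: "\<And>m. m < k \<Longrightarrow> (succ ^^ (i + Suc m mod k)) (e0, True) = succ ((succ ^^ (i + m)) (e0, True))"
    by (rule funpow_periodic_orbit) blast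
  define s where "s m = (succ ^^ (i + m)) (e0, True)" for m
  have "(succ ^^ j) (e0, True) \<in> ?H" for j
    by (induction j) (use e0 succ in auto)
  hence sH: "s m \<in> ?H" for m
    by (simp add: s_def)
  have "is_cycle G om (map (\<lambda>m. endp G (fst (s m)) (snd (s m))) [0..<k]) (map (\<lambda>m. fst (s m)) [0..<k])"
  proof (rule alternating_closed_trail_is_cycle[of k "\<lambda>m. fst (s m)" G "\<lambda>m. snd (s m)", OF k(1)])
    fix m assume "m < k"
    with sH[of m] succ[of "s m"] next_state[of m, folded s_def]
    show "fst (s m) \<in> edges G \<and>
        endp G (fst (s m)) (\<not> snd (s m)) = endp G (fst (s (Suc m mod k))) (snd (s (Suc m mod k)))"
      and "om (fst (s m)) (\<not> snd (s m)) \<noteq> om (fst (s (Suc m mod k))) (snd (s (Suc m mod k)))"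
      by (auto simp: induced_edges_def)
  qed
  thus False using ac by (auto simp: acyclic_orientation_def)
qed

section \<open>Packed colorings\<close>

definition preserving_on :: "('v, 'e) sgraph \<Rightarrow> ('e \<Rightarrow> bool \<Rightarrow> bool) \<Rightarrow> 'v set \<Rightarrow> ('v \<Rightarrow> int) \<Rightarrow> bool" where
  "preserving_on G om U \<kappa> \<longleftrightarrow> (\<forall>v. v \<notin> U \<longrightarrow> \<kappa> v = 0) \<and>
     (\<forall>e\<in>induced_edges G U. \<forall>h. \<kappa> (endp G e h) \<noteq> sgnmul G e (\<kappa> (endp G e (\<not> h))) \<and>
        (om e h \<longleftrightarrow> sgnmul G e (\<kappa> (endp G e (\<not> h))) < \<kappa> (endp G e h)))"

lemma preserving_on_verts:
  assumes "wf_sgraph G"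
  shows "preserving_on G om (verts G) \<kappa> \<longleftrightarrow> proper G \<kappa> \<and> preserves G om \<kappa>"
  unfolding preserving_on_def proper_def preserves_def induced_edges_verts[OF assms] all_bool_eq
  by (auto simp: sgnmul_def)

definition level :: "'v set \<Rightarrow> ('v \<Rightarrow> int) \<Rightarrow> int" where
  "level U \<kappa> = Max (insert 0 ((\<lambda>v. \<bar>\<kappa> v\<bar>) ` U))"

definition packed :: "'v set \<Rightarrow> ('v \<Rightarrow> int) \<Rightarrow> bool" where
  "packed U \<kappa> \<longleftrightarrow> (\<forall>j. 1 \<le> j \<longrightarrow> j \<le> level U \<kappa> \<longrightarrow> (\<exists>v\<in>U. \<bar>\<kappa> v\<bar> = j))"

definition packed_colorings :: "('v, 'e) sgraph \<Rightarrow> ('e \<Rightarrow> bool \<Rightarrow> bool) \<Rightarrow> 'v set \<Rightarrow> ('v \<Rightarrow> int) set" where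
  "packed_colorings G om U = {\<kappa>. preserving_on G om U \<kappa> \<and> packed U \<kappa>}"

lemma abs_le_level: "finite U \<Longrightarrow> v \<in> U \<Longrightarrow> \<bar>\<kappa> v\<bar> \<le> level U \<kappa>"
  unfolding level_def by (intro Max_ge) auto

lemma level_nonneg: "finite U \<Longrightarrow> 0 \<le> level U \<kappa>"
  unfolding level_def by (intro Max_ge) auto

lemma level_attained: "finite U \<Longrightarrow> level U \<kappa> \<noteq> 0 \<Longrightarrow> \<exists>v\<in>U. \<bar>\<kappa> v\<bar> = level U \<kappa>"
  unfolding level_def using Max_in[of "insert 0 ((\<lambda>v. \<bar>\<kappa> v\<bar>) ` U)"] by auto

lemma level_zero [simp]: "level U (\<lambda>_. 0) = 0"
  by (cases "U = {}") (simp_all add: level_def image_constant_conv)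

lemma level_eqI:
  assumes "finite U" "\<And>v. v \<in> U \<Longrightarrow> \<bar>\<kappa> v\<bar> \<le> L" "0 \<le> L" "L \<noteq> 0 \<Longrightarrow> \<exists>v\<in>U. \<bar>\<kappa> v\<bar> = L"
  shows "level U \<kappa> = L"
proof -
  have le: "level U \<kappa> \<le> L"
    using assms(1-3) unfolding level_def by (subst Max_le_iff) auto
  show ?thesis
  proof (cases "L = 0")
    case True
    thus ?thesis using le level_nonneg[OF assms(1), of \<kappa>] by simp
  next
    case False
    then obtain v where "v \<in> U" "\<bar>\<kappa> v\<bar> = L" using assms(4) by blast
    thus ?thesis using le abs_le_level[OF assms(1), of v \<kappa>] by simp
  qed
qed

lemma level_le_card:
  assumes "finite U" "packed U \<kappa>"
  shows "level U \<kappa> \<le> int (card U)"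
proof -
  have "{1..level U \<kappa>} \<subseteq> (\<lambda>v. \<bar>\<kappa> v\<bar>) ` U"
    using assms(2) unfolding packed_def by force
  hence "card {1..level U \<kappa>} \<le> card ((\<lambda>v. \<bar>\<kappa> v\<bar>) ` U)"
    using assms(1) by (intro card_mono) auto
  also have "\<dots> \<le> card U"
    using assms(1) by (rule card_image_le)
  finally show ?thesis by simp
qed

lemma finite_packed_colorings:
  assumes "finite U"
  shows "finite (packed_colorings G om U)"
proof (rule finite_subset)
  let ?c = "int (card U)"
  show "packed_colorings G om U \<subseteq> {\<kappa>. \<forall>v. (v \<in> U \<longrightarrow> \<kappa> v \<in> {-?c..?c}) \<and> (v \<notin> U \<longrightarrow> \<kappa> v = 0)}"
    using abs_le_level[OF assms] level_le_card[OF assms] order_trans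
    by (fastforce simp: packed_colorings_def preserving_on_def abs_le_iff)
  show "finite \<dots>"
    by (intro finite_set_of_finite_funs assms) simp
qed

definition top_pos :: "'v set \<Rightarrow> ('v \<Rightarrow> int) \<Rightarrow> 'v set" where
  "top_pos U \<kappa> = {v\<in>U. \<kappa> v = level U \<kappa>}"

definition top_neg :: "'v set \<Rightarrow> ('v \<Rightarrow> int) \<Rightarrow> 'v set" where
  "top_neg U \<kappa> = {v\<in>U. \<kappa> v = - level U \<kappa>}"

definition strip :: "'v set \<Rightarrow> ('v \<Rightarrow> int) \<Rightarrow> 'v \<Rightarrow> int" where
  "strip U \<kappa> v = (if v \<in> top_pos U \<kappa> \<union> top_neg U \<kappa> then 0 else \<kappa> v)"

definition raise :: "'v set \<Rightarrow> 'v set \<Rightarrow> 'v set \<Rightarrow> ('v \<Rightarrow> int) \<Rightarrow> 'v \<Rightarrow> int" where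
  "raise U S B \<kappa> v = (if v \<in> S then level (U - S - B) \<kappa> + 1
     else if v \<in> B then - (level (U - S - B) \<kappa> + 1) else \<kappa> v)"

definition top_pairs :: "('v, 'e) sgraph \<Rightarrow> ('e \<Rightarrow> bool \<Rightarrow> bool) \<Rightarrow> 'v set \<Rightarrow> ('v set \<times> 'v set) set" where
  "top_pairs G om U = disjoint_subset_pairs (sinks_on G om U) (sources_on G om U) - {({}, {})}"

lemma finite_top_pairs: "finite U \<Longrightarrow> finite (top_pairs G om U)"
  unfolding top_pairs_def
  by (intro finite_Diff finite_disjoint_subset_pairs) (auto simp: sinks_on_def sources_on_def)

lemma top_pairsD:
  assumes "(S, B) \<in> top_pairs G om U"
  shows "S \<subseteq> sinks_on G om U" "B \<subseteq> sources_on G om U" "S \<inter> B = {}" "S \<union> B \<subseteq> U" "S \<union> B \<noteq> {}"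
  using assms by (auto simp: top_pairs_def disjoint_subset_pairs_def sinks_on_def sources_on_def)

lemma sum_top_pairs_without_sources:
  assumes "finite U"
  shows "(\<Sum>(S, B)\<in>top_pairs G om U. if B = {} then f S else 0) = (\<Sum>S\<in>Pow (sinks_on G om U) - {{}}. f S)"
proof -
  have image: "{p\<in>top_pairs G om U. snd p = {}} = (\<lambda>S. (S, {})) ` (Pow (sinks_on G om U) - {{}})"
    by (auto simp: top_pairs_def disjoint_subset_pairs_def image_iff)
  have inj: "inj_on (\<lambda>S. (S, {})) (Pow (sinks_on G om U) - {{}})"
    by (auto simp: inj_on_def)
  have "(\<Sum>(S, B)\<in>top_pairs G om U. if B = {} then f S else 0) =
      (\<Sum>p\<in>{p\<in>top_pairs G om U. snd p = {}}. f (fst p))"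
    by (simp add: split_def sum.inter_filter[OF finite_top_pairs[OF assms]])
  also have "\<dots> = (\<Sum>S\<in>Pow (sinks_on G om U) - {{}}. f S)"
    unfolding image by (simp add: sum.reindex[OF inj])
  finally show ?thesis .
qed

lemma top_pair_of_packed:
  assumes U: "finite U" and \<kappa>: "preserving_on G om U \<kappa>" and L: "1 \<le> level U \<kappa>"
  shows "(top_pos U \<kappa>, top_neg U \<kappa>) \<in> top_pairs G om U"
proof -
  have bound: "\<bar>\<kappa> (endp G e h)\<bar> \<le> level U \<kappa>" if "e \<in> induced_edges G U" for e h
    using abs_le_level[OF U endp_in_induced[OF that]] .
  have arrow: "om e h \<longleftrightarrow> sgnmul G e (\<kappa> (endp G e (\<not> h))) < \<kappa> (endp G e h)"
    and proper: "\<kappa> (endp G e h) \<noteq> sgnmul G e (\<kappa> (endp G e (\<not> h)))"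
    if "e \<in> induced_edges G U" for e h
    using \<kappa> that by (auto simp: preserving_on_def)
  have "om e h" if "e \<in> induced_edges G U" "\<kappa> (endp G e h) = level U \<kappa>" for e h
    using arrow[OF that(1), of h] proper[OF that(1), of h] bound[OF that(1), of "\<not> h"] that(2)
    by (auto simp: abs_le_iff sgnmul_def)
  hence "top_pos U \<kappa> \<subseteq> sinks_on G om U"
    by (auto simp: top_pos_def sinks_on_def)
  moreover have "\<not> om e h" if "e \<in> induced_edges G U" "\<kappa> (endp G e h) = - level U \<kappa>" for e h
    using arrow[OF that(1), of h] bound[OF that(1), of "\<not> h"] that(2) by (auto simp: abs_le_iff sgnmul_def)
  hence "top_neg U \<kappa> \<subseteq> sources_on G om U"
    by (auto simp: top_neg_def sources_on_def)
  moreover have "top_pos U \<kappa> \<inter> top_neg U \<kappa> = {}"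
    using L by (auto simp: top_pos_def top_neg_def)
  moreover have "top_pos U \<kappa> \<union> top_neg U \<kappa> \<noteq> {}"
    using level_attained[OF U, of \<kappa>] L by (auto simp: top_pos_def top_neg_def abs_if split: if_splits)
  ultimately show ?thesis
    by (auto simp: top_pairs_def disjoint_subset_pairs_def)
qed

lemma preserving_on_strip:
  assumes pres: "preserving_on G om U \<kappa>"
  shows "preserving_on G om (U - top_pos U \<kappa> - top_neg U \<kappa>) (strip U \<kappa>)"
    (is "preserving_on G om ?W _")
  unfolding preserving_on_def
proof (intro conjI allI impI ballI)
  fix v assume "v \<notin> ?W"
  thus "strip U \<kappa> v = 0" using pres by (auto simp: strip_def preserving_on_def)
next
  fix e h assume e: "e \<in> induced_edges G ?W"
  hence "e \<in> induced_edges G U" by (auto simp: induced_edges_def)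
  moreover have "strip U \<kappa> (endp G e b) = \<kappa> (endp G e b)" for b
    using endp_in_induced[OF e] by (auto simp: strip_def)
  ultimately show "strip U \<kappa> (endp G e h) \<noteq> sgnmul G e (strip U \<kappa> (endp G e (\<not> h)))"
    and "om e h \<longleftrightarrow> sgnmul G e (strip U \<kappa> (endp G e (\<not> h))) < strip U \<kappa> (endp G e h)"
    using pres by (auto simp: preserving_on_def)
qed

lemma strip_packed:
  assumes U: "finite U" and \<kappa>: "\<kappa> \<in> packed_colorings G om U" and L: "1 \<le> level U \<kappa>"
  defines "W \<equiv> U - top_pos U \<kappa> - top_neg U \<kappa>"
  shows "strip U \<kappa> \<in> packed_colorings G om W" "level W (strip U \<kappa>) = level U \<kappa> - 1"
    "raise U (top_pos U \<kappa>) (top_neg U \<kappa>) (strip U \<kappa>) = \<kappa>"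
proof -
  have pres: "preserving_on G om U \<kappa>" and pk: "packed U \<kappa>"
    using \<kappa> by (auto simp: packed_colorings_def)
  have strip_W: "strip U \<kappa> v = \<kappa> v" if "v \<in> W" for v
    using that by (auto simp: W_def strip_def)
  have below: "\<bar>\<kappa> v\<bar> \<le> level U \<kappa> - 1" if "v \<in> W" for v
    using that abs_le_level[OF U, of v \<kappa>] by (auto simp: W_def top_pos_def top_neg_def)
  have attained: "\<exists>v\<in>W. \<bar>strip U \<kappa> v\<bar> = j" if j: "1 \<le> j" "j \<le> level U \<kappa> - 1" for j
  proof -
    obtain v where "v \<in> U" "\<bar>\<kappa> v\<bar> = j"
      using pk j unfolding packed_def by fastforce
    moreover from this j have "v \<in> W" by (auto simp: W_def top_pos_def top_neg_def)
    ultimately show ?thesis using strip_W by force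
  qed
  show level_W: "level W (strip U \<kappa>) = level U \<kappa> - 1"
    using U L below strip_W attained by (intro level_eqI) (auto simp: W_def)
  have "preserving_on G om W (strip U \<kappa>)"
    unfolding W_def using pres by (rule preserving_on_strip)
  moreover have "packed W (strip U \<kappa>)"
    unfolding packed_def level_W using attained by blast
  ultimately show "strip U \<kappa> \<in> packed_colorings G om W"
    by (simp add: packed_colorings_def)
  show "raise U (top_pos U \<kappa>) (top_neg U \<kappa>) (strip U \<kappa>) = \<kappa>"
    using level_W by (auto simp: raise_def strip_def top_pos_def top_neg_def W_def fun_eq_iff)
qed

lemma raise_eq_top_iff:
  assumes "finite U" "S \<inter> B = {}" "v \<in> U"
  shows "raise U S B \<kappa> v = level (U - S - B) \<kappa> + 1 \<longleftrightarrow> v \<in> S"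
    and "raise U S B \<kappa> v = - (level (U - S - B) \<kappa> + 1) \<longleftrightarrow> v \<in> B"
    and "\<bar>raise U S B \<kappa> v\<bar> \<le> level (U - S - B) \<kappa> + 1"
proof -
  have "0 \<le> level (U - S - B) \<kappa>" using assms(1) by (simp add: level_nonneg)
  moreover have "v \<notin> S \<Longrightarrow> v \<notin> B \<Longrightarrow> \<bar>\<kappa> v\<bar> \<le> level (U - S - B) \<kappa>"
    using assms by (intro abs_le_level) auto
  ultimately show "raise U S B \<kappa> v = level (U - S - B) \<kappa> + 1 \<longleftrightarrow> v \<in> S"
    and "raise U S B \<kappa> v = - (level (U - S - B) \<kappa> + 1) \<longleftrightarrow> v \<in> B"
    and "\<bar>raise U S B \<kappa> v\<bar> \<le> level (U - S - B) \<kappa> + 1"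
    using assms(2) by (auto simp: raise_def)
qed

lemma level_raise:
  assumes "finite U" "S \<inter> B = {}" "S \<union> B \<subseteq> U" "S \<union> B \<noteq> {}"
  shows "level U (raise U S B \<kappa>) = level (U - S - B) \<kappa> + 1"
proof (rule level_eqI)
  show "0 \<le> level (U - S - B) \<kappa> + 1" using assms(1) level_nonneg[of "U - S - B"] by simp
  obtain v where "v \<in> S \<union> B" using assms(4) by blast
  thus "\<exists>v\<in>U. \<bar>raise U S B \<kappa> v\<bar> = level (U - S - B) \<kappa> + 1"
    using assms(2,3) raise_eq_top_iff[OF assms(1,2), of v \<kappa>] by (intro bexI[of _ v]) auto
qed (use raise_eq_top_iff[OF assms(1,2)] assms(1) in auto)

lemma top_raise:
  assumes "finite U" "S \<inter> B = {}" "S \<union> B \<subseteq> U" "S \<union> B \<noteq> {}"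
  shows "top_pos U (raise U S B \<kappa>) = S" "top_neg U (raise U S B \<kappa>) = B"
  using raise_eq_top_iff[OF assms(1,2)] assms(3)
  by (auto simp: top_pos_def top_neg_def level_raise[OF assms])

lemma strip_raise:
  assumes "finite U" "S \<inter> B = {}" "S \<union> B \<subseteq> U" "S \<union> B \<noteq> {}"
    and zero: "\<And>v. v \<in> S \<union> B \<Longrightarrow> \<kappa> v = 0"
  shows "strip U (raise U S B \<kappa>) = \<kappa>"
  using zero by (auto simp: fun_eq_iff strip_def top_raise[OF assms(1-4)] raise_def)

text \<open>Here \<open>oa, ob\<close> are the arrows at the endpoints colored \<open>a, b\<close> of an edge of sign \<open>p\<close>.\<close>

lemma extreme_value_edge_preserved:
  fixes a b L :: int
  assumes "\<bar>a\<bar> \<le> L" "\<bar>b\<bar> \<le> L" "a = L \<or> a = - L \<or> b = L \<or> b = - L"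
    and "a = L \<Longrightarrow> oa" "a = - L \<Longrightarrow> \<not> oa" "b = L \<Longrightarrow> ob" "b = - L \<Longrightarrow> \<not> ob"
    and "ob = (if p then \<not> oa else oa)"
  shows "a \<noteq> (if p then b else - b) \<and> (oa \<longleftrightarrow> (if p then b else - b) < a)"
  using assms(3) by (elim disjE; cases p) (use assms in \<open>auto simp: abs_le_iff less_le\<close>)

lemma raise_edge_preserved:
  fixes h :: bool
  assumes U: "finite U" and ori: "is_orientation G om" and SB: "(S, B) \<in> top_pairs G om U"
    and \<kappa>: "preserving_on G om (U - S - B) \<kappa>" and e: "e \<in> induced_edges G U"
  defines "x \<equiv> endp G e h" and "y \<equiv> endp G e (\<not> h)"
  shows "raise U S B \<kappa> x \<noteq> sgnmul G e (raise U S B \<kappa> y) \<and>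
    (om e h \<longleftrightarrow> sgnmul G e (raise U S B \<kappa> y) < raise U S B \<kappa> x)"
proof (cases "x \<in> S \<union> B \<or> y \<in> S \<union> B")
  case False
  hence "e \<in> induced_edges G (U - S - B)"
    using e endp_in_induced[OF e, of True] endp_in_induced[OF e, of False]
    by (cases h) (auto simp: induced_edges_def x_def y_def)
  thus ?thesis using \<kappa> False by (auto simp: preserving_on_def raise_def x_def y_def)
next
  case True
  note SB = top_pairsD[OF SB]
  let ?L = "level (U - S - B) \<kappa> + 1"
  have "x \<in> U" "y \<in> U" using endp_in_induced[OF e] by (auto simp: x_def y_def)
  note top = raise_eq_top_iff[OF U SB(3) this(1), of \<kappa>] raise_eq_top_iff[OF U SB(3) this(2), of \<kappa>]
  have "e \<in> edges G" using e by (simp add: induced_edges_def)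
  have arrows: "x \<in> S \<Longrightarrow> om e h" "x \<in> B \<Longrightarrow> \<not> om e h"
    "y \<in> S \<Longrightarrow> om e (\<not> h)" "y \<in> B \<Longrightarrow> \<not> om e (\<not> h)"
    using subsetD[OF SB(1)] subsetD[OF SB(2)] e by (simp_all add: sinks_on_def sources_on_def x_def y_def)
  have "raise U S B \<kappa> x \<noteq> (if pos G e then raise U S B \<kappa> y else - raise U S B \<kappa> y) \<and>
    (om e h \<longleftrightarrow> (if pos G e then raise U S B \<kappa> y else - raise U S B \<kappa> y) < raise U S B \<kappa> x)"
  proof (rule extreme_value_edge_preserved[where L = ?L and ob = "om e (\<not> h)"])
    show "om e (\<not> h) = (if pos G e then \<not> om e h else om e h)"
      by (rule orientation_other_half[OF ori \<open>e \<in> edges G\<close>])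
    show "raise U S B \<kappa> x = ?L \<or> raise U S B \<kappa> x = - ?L \<or> raise U S B \<kappa> y = ?L \<or> raise U S B \<kappa> y = - ?L"
      using True top(1,2,4,5) by blast
    show "\<bar>raise U S B \<kappa> x\<bar> \<le> ?L" by (fact top(3))
    show "\<bar>raise U S B \<kappa> y\<bar> \<le> ?L" by (fact top(6))
    show "om e h" if "raise U S B \<kappa> x = ?L" using arrows(1) top(1) that by simp
    show "\<not> om e h" if "raise U S B \<kappa> x = - ?L" using arrows(2) top(2) that by simp
    show "om e (\<not> h)" if "raise U S B \<kappa> y = ?L" using arrows(3) top(4) that by simp
    show "\<not> om e (\<not> h)" if "raise U S B \<kappa> y = - ?L" using arrows(4) top(5) that by simp
  qed
  thus ?thesis by (simp add: sgnmul_def)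
qed

lemma preserving_on_raise:
  assumes U: "finite U" and ori: "is_orientation G om" and SB: "(S, B) \<in> top_pairs G om U"
    and \<kappa>: "preserving_on G om (U - S - B) \<kappa>"
  shows "preserving_on G om U (raise U S B \<kappa>)"
  using raise_edge_preserved[OF U ori SB \<kappa>] top_pairsD(4)[OF SB] \<kappa>
  by (auto simp: preserving_on_def raise_def)

lemma raise_packed:
  assumes U: "finite U" and ori: "is_orientation G om" and SB: "(S, B) \<in> top_pairs G om U"
    and \<kappa>: "\<kappa> \<in> packed_colorings G om (U - S - B)"
  shows "raise U S B \<kappa> \<in> packed_colorings G om U"
proof -
  note SB' = top_pairsD[OF SB]
  have "packed U (raise U S B \<kappa>)"
    unfolding packed_def level_raise[OF U SB'(3-5)]
  proof (intro allI impI)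
    fix j assume j: "1 \<le> j" "j \<le> level (U - S - B) \<kappa> + 1"
    show "\<exists>v\<in>U. \<bar>raise U S B \<kappa> v\<bar> = j"
    proof (cases "j = level (U - S - B) \<kappa> + 1")
      case True
      obtain v where "v \<in> S \<union> B" using SB'(5) by blast
      thus ?thesis
        using True SB'(3,4) raise_eq_top_iff[OF U SB'(3), of v \<kappa>] by (intro bexI[of _ v]) auto
    next
      case False
      then obtain v where "v \<in> U - S - B" "\<bar>\<kappa> v\<bar> = j"
        using \<kappa> j unfolding packed_colorings_def packed_def by fastforce
      thus ?thesis by (intro bexI[of _ v]) (auto simp: raise_def)
    qed
  qed
  thus ?thesis
    using preserving_on_raise[OF U ori SB] \<kappa> by (simp add: packed_colorings_def)
qed

lemma packed_colorings_level_zero: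
  assumes "finite U"
  shows "packed_colorings G om U \<inter> {\<kappa>. level U \<kappa> = 0} =
    (if induced_edges G U = {} then {\<lambda>_. 0} else {})"
proof -
  have zero: "\<kappa> = (\<lambda>_. 0)" if "\<kappa> \<in> packed_colorings G om U" "level U \<kappa> = 0" for \<kappa>
    using that abs_le_level[OF assms, of _ \<kappa>]
    by (fastforce simp: packed_colorings_def preserving_on_def)
  hence "packed_colorings G om U \<inter> {\<kappa>. level U \<kappa> = 0} \<subseteq> {\<lambda>_. 0}"
    by blast
  moreover have "(\<lambda>_. 0) \<in> packed_colorings G om U \<longleftrightarrow> induced_edges G U = {}"
    by (auto simp: packed_colorings_def preserving_on_def packed_def sgnmul_def)
  ultimately show ?thesis
    by (cases "induced_edges G U = {}") auto
qed

lemma sum_packed_colorings_peel: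
  assumes U: "finite U" and ori: "is_orientation G om"
  shows "(\<Sum>\<kappa>\<in>packed_colorings G om U. g \<kappa>) =
    (if induced_edges G U = {} then g (\<lambda>_. 0) else 0) +
    (\<Sum>(S, B)\<in>top_pairs G om U. \<Sum>\<kappa>\<in>packed_colorings G om (U - S - B). g (raise U S B \<kappa>))"
proof -
  let ?P = "packed_colorings G om U"
  let ?Q = "Sigma (top_pairs G om U) (\<lambda>(S, B). packed_colorings G om (U - S - B))"
  define split_top where "split_top \<kappa> = ((top_pos U \<kappa>, top_neg U \<kappa>), strip U \<kappa>)" for \<kappa>
  define join_top where "join_top p = raise U (fst (fst p)) (snd (fst p)) (snd p)" for p
  have "(\<Sum>\<kappa>\<in>?P - {\<kappa>. level U \<kappa> = 0}. g \<kappa>) = (\<Sum>p\<in>?Q. g (join_top p))"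
  proof (rule sum.reindex_bij_witness[where i = join_top and j = split_top])
    fix \<kappa> assume "\<kappa> \<in> ?P - {\<kappa>. level U \<kappa> = 0}"
    hence \<kappa>: "\<kappa> \<in> ?P" "1 \<le> level U \<kappa>" using level_nonneg[OF U, of \<kappa>] by auto
    show "join_top (split_top \<kappa>) = \<kappa>"
      using strip_packed(3)[OF U \<kappa>] by (simp add: join_top_def split_top_def)
    thus "g (join_top (split_top \<kappa>)) = g \<kappa>" by simp
    have "preserving_on G om U \<kappa>" using \<kappa>(1) by (simp add: packed_colorings_def)
    with strip_packed(1)[OF U \<kappa>] show "split_top \<kappa> \<in> ?Q"
      using top_pair_of_packed[OF U _ \<kappa>(2)] by (simp add: split_top_def)
  next
    fix p assume "p \<in> ?Q"
    then obtain S B \<kappa> where p: "p = ((S, B), \<kappa>)" and SB: "(S, B) \<in> top_pairs G om U"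
      and \<kappa>: "\<kappa> \<in> packed_colorings G om (U - S - B)" by auto
    note SB' = top_pairsD[OF SB]
    have zero: "\<kappa> v = 0" if "v \<in> S \<union> B" for v
      using \<kappa> that by (auto simp: packed_colorings_def preserving_on_def)
    show "join_top p \<in> ?P - {\<kappa>. level U \<kappa> = 0}"
      using raise_packed[OF U ori SB \<kappa>] level_raise[OF U SB'(3-5)] level_nonneg[of "U - S - B" \<kappa>] U
      by (simp add: p join_top_def)
    show "split_top (join_top p) = p"
      using top_raise[OF U SB'(3-5)] strip_raise[OF U SB'(3-5) zero] by (simp add: p join_top_def split_top_def)
  qed
  also have "\<dots> = (\<Sum>(S, B)\<in>top_pairs G om U. \<Sum>\<kappa>\<in>packed_colorings G om (U - S - B). g (raise U S B \<kappa>))"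
    unfolding split_def using finite_top_pairs[OF U] U
    by (subst sum.Sigma) (auto simp: join_top_def split_def intro: finite_packed_colorings)
  finally show ?thesis
    using sum.Int_Diff[OF finite_packed_colorings[OF U, of G om], where B = "{\<kappa>. level U \<kappa> = 0}" and g = g]
    by (simp add: packed_colorings_level_zero[OF U])
qed

definition signed_packed_count :: "('v, 'e) sgraph \<Rightarrow> ('e \<Rightarrow> bool \<Rightarrow> bool) \<Rightarrow> 'v set \<Rightarrow> int" where
  "signed_packed_count G om U = (\<Sum>\<kappa>\<in>packed_colorings G om U. (-1) ^ nat (level U \<kappa>))"

lemma card_remove_top_pair:
  assumes "finite U" "(S, B) \<in> top_pairs G om U"
  shows "card (U - S - B) + (card S + card B) = card U" "card (U - S - B) < card U"
proof -
  note SB = top_pairsD[OF assms(2)]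
  have fin: "finite (S \<union> B)" using SB(4) assms(1) by (rule finite_subset)
  have "card (S \<union> B) = card S + card B"
    using fin SB(3) by (intro card_Un_disjoint) auto
  moreover have "U - S - B = U - (S \<union> B)" by blast
  hence "card (U - S - B) = card U - card (S \<union> B)"
    using card_Diff_subset[OF fin SB(4)] by simp
  moreover have "card (S \<union> B) \<le> card U" "0 < card (S \<union> B)"
    using card_mono[OF assms(1) SB(4)] fin SB(5) by (auto simp: card_gt_0_iff)
  ultimately show "card (U - S - B) + (card S + card B) = card U" "card (U - S - B) < card U"
    by linarith+
qed

lemma signed_packed_count_peel:
  assumes U: "finite U" and ori: "is_orientation G om"
  shows "signed_packed_count G om U = (if induced_edges G U = {} then 1 else 0) -
    (\<Sum>(S, B)\<in>top_pairs G om U. signed_packed_count G om (U - S - B))"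
proof -
  have "(\<Sum>\<kappa>\<in>packed_colorings G om (U - S - B). (-1::int) ^ nat (level U (raise U S B \<kappa>))) =
      - signed_packed_count G om (U - S - B)"
    if "(S, B) \<in> top_pairs G om U" for S B
  proof -
    have "(-1::int) ^ nat (level U (raise U S B \<kappa>)) = - ((-1) ^ nat (level (U - S - B) \<kappa>))" for \<kappa>
      using level_raise[OF U top_pairsD(3-5)[OF that]] level_nonneg[of "U - S - B" \<kappa>] U
      by (simp add: nat_add_distrib)
    thus ?thesis by (simp add: signed_packed_count_def sum_negf)
  qed
  hence "(\<Sum>(S, B)\<in>top_pairs G om U. \<Sum>\<kappa>\<in>packed_colorings G om (U - S - B).
        (-1::int) ^ nat (level U (raise U S B \<kappa>))) =
      (\<Sum>(S, B)\<in>top_pairs G om U. - signed_packed_count G om (U - S - B))"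
    by (intro sum.cong refl) auto
  thus ?thesis
    unfolding signed_packed_count_def sum_packed_colorings_peel[OF U ori]
    by (simp add: sum_negf split_def)
qed

lemma signed_packed_count_acyclic:
  assumes wf: "wf_sgraph G" and ac: "acyclic_orientation G om" and "finite U"
  shows "signed_packed_count G om U = (-1) ^ card U"
  using \<open>finite U\<close>
proof (induction "card U" arbitrary: U rule: less_induct)
  case less
  note U = \<open>finite U\<close>
  let ?sinks = "sinks_on G om U" and ?sources = "sources_on G om U"
  define c :: int where "c = (-1) ^ card U"
  have smaller: "signed_packed_count G om (U - S - B) = c * (-1) ^ (card S + card B)"
    if "(S, B) \<in> top_pairs G om U" for S B
  proof -
    have "c = (-1) ^ card (U - S - B) * (-1) ^ (card S + card B)"
      using card_remove_top_pair(1)[OF U that] by (simp add: c_def flip: power_add)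
    thus ?thesis
      using less.hyps[OF card_remove_top_pair(2)[OF U that]] U by (simp add: mult.assoc)
  qed
  have "finite (disjoint_subset_pairs ?sinks ?sources)"
    using U by (intro finite_disjoint_subset_pairs) (auto simp: sinks_on_def sources_on_def)
  moreover have "({}, {}) \<in> disjoint_subset_pairs ?sinks ?sources"
    by (simp add: disjoint_subset_pairs_def)
  ultimately have "signed_packed_count G om U = (if induced_edges G U = {} then 1 else 0) -
      c * ((\<Sum>(S, B)\<in>disjoint_subset_pairs ?sinks ?sources. (-1) ^ (card S + card B)) - 1)"
    using ac
    by (simp add: signed_packed_count_peel[OF U] acyclic_orientation_def top_pairs_def
        sum.remove sum_distrib_left smaller split_def)
  also have "\<dots> = c"
  proof (cases "induced_edges G U = {}")
    case True
    hence "?sinks = U" "?sources = U"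
      by (auto simp: sinks_on_def sources_on_def)
    thus ?thesis using True U sum_sign_disjoint_subset_pairs[OF U U]
      by (simp add: c_def algebra_simps)
  next
    case False
    thus ?thesis using U acyclic_sinks_on_ne_sources_on[OF wf ac False]
      by (simp add: sum_sign_disjoint_subset_pairs sinks_on_def sources_on_def)
  qed
  finally show ?case by (simp add: c_def)
qed

section \<open>A functional for each degree\<close>

definition mlevel :: "int multiset \<Rightarrow> int" where
  "mlevel m = Max (insert 0 (abs ` set_mset m))"

definition mpacked :: "int multiset \<Rightarrow> bool" where
  "mpacked m \<longleftrightarrow> (\<forall>j. 1 \<le> j \<longrightarrow> j \<le> mlevel m \<longrightarrow> j \<in># m \<or> - j \<in># m)"

text \<open>Summed over the packed colorings preserving an acyclic orientation \<open>P\<close> of a graph with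
  \<open>n\<close> vertices, the first summand of the weight yields \<open>1\<close> and the second yields
  \<open>t^sink(P) - 1\<close>, each nonempty set of sinks taking the top level in turn
  (\<open>sum_weight_packed_colorings\<close>). As the weight vanishes unless the coloring is packed,
  restricting \<open>Phi n\<close> to colors in \<open>[-n, n]\<close> loses nothing.\<close>

definition weight :: "nat \<Rightarrow> int multiset \<Rightarrow> rat poly" where
  "weight n m = (if size m = n \<and> mpacked m then
      (-1) ^ (n + nat (mlevel m)) +
      (if 1 \<le> mlevel m \<and> - mlevel m \<notin># m
       then ([:0, 1:] - 1) ^ count m (mlevel m) * (-1) ^ (n - count m (mlevel m) + nat (mlevel m - 1))
       else 0)
    else 0)"

definition Phi :: "nat \<Rightarrow> series \<Rightarrow> rat poly" where
  "Phi n f = (\<Sum>m\<in>multisets_of_size {- int n..int n} n. smult (f m) (weight n m))"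

lemma
  fixes \<kappa> :: "'v \<Rightarrow> int"
  assumes V: "finite V"
  shows mlevel_image_mset: "mlevel (image_mset \<kappa> (mset_set V)) = level V \<kappa>"
    and mpacked_image_mset: "mpacked (image_mset \<kappa> (mset_set V)) \<longleftrightarrow> packed V \<kappa>"
proof -
  have set: "set_mset (image_mset \<kappa> (mset_set V)) = \<kappa> ` V" using V by simp
  show level: "mlevel (image_mset \<kappa> (mset_set V)) = level V \<kappa>"
    using V by (simp add: mlevel_def level_def image_image)
  have "(j \<in> \<kappa> ` V \<or> - j \<in> \<kappa> ` V) \<longleftrightarrow> (\<exists>v\<in>V. \<bar>\<kappa> v\<bar> = j)" if j: "1 \<le> j" for j
  proof
    assume "j \<in> \<kappa> ` V \<or> - j \<in> \<kappa> ` V"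
    then obtain v where "v \<in> V" "\<kappa> v = j \<or> \<kappa> v = - j" by auto
    thus "\<exists>v\<in>V. \<bar>\<kappa> v\<bar> = j" using j by (intro bexI[of _ v]) auto
  next
    assume "\<exists>v\<in>V. \<bar>\<kappa> v\<bar> = j"
    then obtain v where "v \<in> V" "\<bar>\<kappa> v\<bar> = j" by blast
    moreover from this(2) have "\<kappa> v = j \<or> \<kappa> v = - j" by arith
    ultimately show "j \<in> \<kappa> ` V \<or> - j \<in> \<kappa> ` V" by force
  qed
  thus "mpacked (image_mset \<kappa> (mset_set V)) \<longleftrightarrow> packed V \<kappa>"
    unfolding mpacked_def packed_def level set by simp
qed

definition top_weight :: "nat \<Rightarrow> 'v set \<Rightarrow> ('v \<Rightarrow> int) \<Rightarrow> 'a :: comm_ring_1 poly" where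
  "top_weight n U \<kappa> = (if 1 \<le> level U \<kappa> \<and> top_neg U \<kappa> = {}
     then ([:0, 1:] - 1) ^ card (top_pos U \<kappa>) * (-1) ^ (n - card (top_pos U \<kappa>) + nat (level U \<kappa> - 1))
     else 0)"

lemma weight_image_mset:
  fixes \<kappa> :: "'v \<Rightarrow> int"
  assumes V: "finite V"
  shows "weight (card V) (image_mset \<kappa> (mset_set V)) =
    (if packed V \<kappa> then (-1) ^ (card V + nat (level V \<kappa>)) + top_weight (card V) V \<kappa> else 0)"
proof -
  have count: "count (image_mset \<kappa> (mset_set V)) x = card {v\<in>V. \<kappa> v = x}" for x
    using V by (simp add: count_image_mset Int_commute vimage_def Collect_conj_eq)
  have "- level V \<kappa> \<in># image_mset \<kappa> (mset_set V) \<longleftrightarrow> top_neg V \<kappa> \<noteq> {}"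
    using V by (force simp: top_neg_def)
  thus ?thesis
    using V by (simp add: weight_def top_weight_def mlevel_image_mset mpacked_image_mset count top_pos_def)
qed

lemma top_weight_raise:
  assumes U: "finite U" and SB: "(S, B) \<in> top_pairs G om U"
  shows "top_weight n U (raise U S B \<kappa>) = (if B = {} then
    ([:0, 1:] - 1) ^ card S * (-1) ^ (n - card S) * (-1) ^ nat (level (U - S - B) \<kappa>) else 0)"
proof -
  note SB' = top_pairsD[OF SB]
  have "0 \<le> level (U - S - B) \<kappa>" using U by (simp add: level_nonneg)
  thus ?thesis
    unfolding top_weight_def level_raise[OF U SB'(3-5)] top_raise[OF U SB'(3-5)]
    by (simp add: power_add mult.assoc)
qed

lemma sum_top_weight_raise:
  assumes wf: "wf_sgraph G" and ac: "acyclic_orientation G om" and U: "finite U"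
    and SB: "(S, B) \<in> top_pairs G om U"
  shows "(\<Sum>\<kappa>\<in>packed_colorings G om (U - S - B). top_weight (card U) U (raise U S B \<kappa>)) =
    (if B = {} then ([:0, 1:] - 1) ^ card S else (0 :: 'a :: comm_ring_1 poly))"
proof (cases "B = {}")
  case True
  have "card (U - S) = card U - card S"
    using top_pairsD(4)[OF SB] U by (subst card_Diff_subset) (auto intro: finite_subset)
  hence "of_int (signed_packed_count G om (U - S - B)) = ((-1 :: 'a poly) ^ (card U - card S))"
    using signed_packed_count_acyclic[OF wf ac, of "U - S"] U True by simp
  hence "(\<Sum>\<kappa>\<in>packed_colorings G om (U - S - B). (-1 :: 'a poly) ^ nat (level (U - S - B) \<kappa>)) =
      (-1) ^ (card U - card S)"
    by (simp add: signed_packed_count_def)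
  thus ?thesis
    unfolding top_weight_raise[OF U SB] using True by (simp add: mult.assoc flip: sum_distrib_left)
qed (simp add: top_weight_raise[OF U SB])

lemma sum_top_weight:
  assumes wf: "wf_sgraph G" and ac: "acyclic_orientation G om" and U: "finite U"
  shows "(\<Sum>\<kappa>\<in>packed_colorings G om U. top_weight (card U) U \<kappa>) =
    ([:0, 1:] :: 'a :: comm_ring_1 poly) ^ card (sinks_on G om U) - 1"
proof -
  have ori: "is_orientation G om" using ac by (simp add: acyclic_orientation_def)
  have "top_weight (card U) U (\<lambda>_. 0) = (0 :: 'a poly)" by (simp add: top_weight_def)
  hence "(\<Sum>\<kappa>\<in>packed_colorings G om U. top_weight (card U) U \<kappa>) =
      (\<Sum>(S, B)\<in>top_pairs G om U. \<Sum>\<kappa>\<in>packed_colorings G om (U - S - B).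
        top_weight (card U) U (raise U S B \<kappa>) :: 'a poly)"
    by (simp add: sum_packed_colorings_peel[OF U ori])
  also have "\<dots> = (\<Sum>(S, B)\<in>top_pairs G om U. if B = {} then ([:0, 1:] - 1) ^ card S else 0)"
  proof (rule sum.cong[OF refl], clarify)
    fix S B assume "(S, B) \<in> top_pairs G om U"
    thus "(\<Sum>\<kappa>\<in>packed_colorings G om (U - S - B). top_weight (card U) U (raise U S B \<kappa>) :: 'a poly) =
        (if B = {} then ([:0, 1:] - 1) ^ card S else 0)"
      by (rule sum_top_weight_raise[OF wf ac U])
  qed
  also have "\<dots> = (\<Sum>S\<in>Pow (sinks_on G om U) - {{}}. ([:0, 1:] - 1) ^ card S)"
    by (rule sum_top_pairs_without_sources[OF U])
  also have "\<dots> = [:0, 1:] ^ card (sinks_on G om U) - 1"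
  proof -
    have "finite (sinks_on G om U)" using U by (simp add: sinks_on_def)
    thus ?thesis
      using sum_power_card_Pow[of "sinks_on G om U" "[:0, 1:] - 1"]
      by (simp add: sum.remove[of "Pow _" "{}"] eq_diff_eq add.commute)
  qed
  finally show ?thesis .
qed

lemma finite_proper_colorings_with_values:
  assumes "wf_sgraph G" "finite A"
  shows "finite {\<kappa>. proper G \<kappa> \<and> set_mset (monomial_of G \<kappa>) \<subseteq> A}"
proof (rule finite_subset)
  have V: "finite (verts G)" using assms(1) by (simp add: wf_sgraph_def)
  thus "{\<kappa>. proper G \<kappa> \<and> set_mset (monomial_of G \<kappa>) \<subseteq> A} \<subseteq>
      {\<kappa>. \<forall>v. (v \<in> verts G \<longrightarrow> \<kappa> v \<in> A) \<and> (v \<notin> verts G \<longrightarrow> \<kappa> v = 0)}"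
    by (auto simp: proper_def monomial_of_def)
  show "finite \<dots>"
    by (intro finite_set_of_finite_funs V assms(2))
qed

lemma finite_preserving_colorings_of_degree:
  assumes "wf_sgraph G"
  shows "finite {\<kappa>. proper G \<kappa> \<and> preserves G om \<kappa> \<and>
    monomial_of G \<kappa> \<in> multisets_of_size {- int n..int n} n}"
  by (rule finite_subset[OF _ finite_proper_colorings_with_values[OF assms, of "{- int n..int n}"]])
    (auto simp: multisets_of_size_def)

lemma Phi_Yfun_eq_sum_weight:
  assumes "wf_sgraph G"
  shows "Phi n (Yfun G om) = (\<Sum>\<kappa>\<in>{\<kappa>. proper G \<kappa> \<and> preserves G om \<kappa> \<and>
      monomial_of G \<kappa> \<in> multisets_of_size {- int n..int n} n}. weight n (monomial_of G \<kappa>))"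
    (is "_ = (\<Sum>\<kappa>\<in>?C. _)")
proof -
  let ?M = "multisets_of_size {- int n..int n} n"
  have "(\<Sum>\<kappa>\<in>?C. weight n (monomial_of G \<kappa>)) =
      (\<Sum>m\<in>?M. \<Sum>\<kappa>\<in>{\<kappa>\<in>?C. monomial_of G \<kappa> = m}. weight n (monomial_of G \<kappa>))"
    by (rule sum.group[symmetric, OF finite_preserving_colorings_of_degree[OF assms]]) (auto intro: finite_multisets_of_size)
  also have "\<dots> = (\<Sum>m\<in>?M. smult (Yfun G om m) (weight n m))"
  proof (rule sum.cong[OF refl])
    fix m assume "m \<in> ?M"
    hence "{\<kappa>\<in>?C. monomial_of G \<kappa> = m} = {\<kappa>. proper G \<kappa> \<and> preserves G om \<kappa> \<and> monomial_of G \<kappa> = m}"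
      by auto
    thus "(\<Sum>\<kappa>\<in>{\<kappa>\<in>?C. monomial_of G \<kappa> = m}. weight n (monomial_of G \<kappa>)) = smult (Yfun G om m) (weight n m)"
      by (simp add: Yfun_def of_nat_mult_conv_smult)
  qed
  finally show ?thesis by (simp add: Phi_def)
qed

lemma sum_weight_packed_colorings:
  assumes wf: "wf_sgraph G" and ac: "acyclic_orientation G om"
  shows "(\<Sum>\<kappa>\<in>packed_colorings G om (verts G). weight (card (verts G)) (monomial_of G \<kappa>)) =
    [:0, 1:] ^ card (sinks G om)"
proof -
  let ?V = "verts G"
  have V: "finite ?V" using wf by (simp add: wf_sgraph_def)
  have "(\<Sum>\<kappa>\<in>packed_colorings G om ?V. weight (card ?V) (monomial_of G \<kappa>)) =
    (\<Sum>\<kappa>\<in>packed_colorings G om ?V. (-1) ^ card ?V * (-1) ^ nat (level ?V \<kappa>) + top_weight (card ?V) ?V \<kappa>)"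
    by (intro sum.cong refl)
      (simp add: monomial_of_def weight_image_mset[OF V] packed_colorings_def power_add)
  also have "\<dots> = (-1) ^ card ?V * of_int (signed_packed_count G om ?V) + ([:0, 1:] ^ card (sinks_on G om ?V) - 1)"
    by (simp add: sum.distrib sum_distrib_left signed_packed_count_def sum_top_weight[OF wf ac V])
  also have "\<dots> = [:0, 1:] ^ card (sinks G om)"
    by (simp add: signed_packed_count_acyclic[OF wf ac V] sinks_on_verts[OF wf])
  finally show ?thesis .
qed

lemma Phi_Yfun:
  assumes wf: "wf_sgraph G" and ac: "acyclic_orientation G om"
  shows "Phi n (Yfun G om) = (if n = card (verts G) then [:0, 1:] ^ card (sinks G om) else 0)"
proof -
  let ?V = "verts G"
  let ?C = "{\<kappa>. proper G \<kappa> \<and> preserves G om \<kappa> \<and> monomial_of G \<kappa> \<in> multisets_of_size {- int n..int n} n}"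
  have V: "finite ?V" using wf by (simp add: wf_sgraph_def)
  have size: "size (monomial_of G \<kappa>) = card ?V" for \<kappa>
    using V by (simp add: monomial_of_def)
  show ?thesis
  proof (cases "n = card ?V")
    case False
    thus ?thesis
      by (simp add: Phi_Yfun_eq_sum_weight[OF wf] weight_def size)
  next
    case True
    have "packed_colorings G om ?V \<subseteq> ?C"
    proof
      fix \<kappa> assume \<kappa>: "\<kappa> \<in> packed_colorings G om ?V"
      have "\<kappa> v \<in> {- int n..int n}" if "v \<in> ?V" for v
        using abs_le_level[OF V that, of \<kappa>] level_le_card[OF V, of \<kappa>] \<kappa> True
        by (simp add: packed_colorings_def abs_le_iff)
      thus "\<kappa> \<in> ?C"
        using \<kappa> True V preserving_on_verts[OF wf]
        by (auto simp: packed_colorings_def multisets_of_size_def monomial_of_def)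
    qed
    moreover have "weight n (monomial_of G \<kappa>) = 0" if "\<kappa> \<in> ?C - packed_colorings G om ?V" for \<kappa>
      using that True V preserving_on_verts[OF wf]
      by (simp add: packed_colorings_def weight_image_mset monomial_of_def)
    moreover note finite_preserving_colorings_of_degree[OF wf, of om n]
    ultimately show ?thesis
      using True sum_weight_packed_colorings[OF wf ac]
      by (simp add: Phi_Yfun_eq_sum_weight[OF wf] sum.mono_neutral_right)
  qed
qed

section \<open>The orientation induced by a proper coloring\<close>

definition induced_orientation :: "('v, 'e) sgraph \<Rightarrow> ('v \<Rightarrow> int) \<Rightarrow> 'e \<Rightarrow> bool \<Rightarrow> bool" where
  "induced_orientation G \<kappa> e h \<longleftrightarrow> e \<in> edges G \<and> sgnmul G e (\<kappa> (endp G e (\<not> h))) < \<kappa> (endp G e h)"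

text \<open>On a cycle, a vertex of maximal absolute color would need an arrow pointing into
  it and one pointing out of it, which the coloring forbids.\<close>

lemma induced_orientation_acyclic:
  assumes "proper G \<kappa>"
  shows "acyclic_orientation G (induced_orientation G \<kappa>)"
  unfolding acyclic_orientation_def
proof (intro conjI notI)
  show "is_orientation G (induced_orientation G \<kappa>)"
    unfolding is_orientation_def
  proof (intro conjI ballI allI impI)
    fix e assume "e \<in> edges G"
    moreover from this have "\<kappa> (fst (ends G e)) \<noteq> sgnmul G e (\<kappa> (snd (ends G e)))"
      using assms by (simp add: proper_def)
    ultimately show "pos G e \<Longrightarrow> induced_orientation G \<kappa> e True \<noteq> induced_orientation G \<kappa> e False"
      and "\<not> pos G e \<Longrightarrow> induced_orientation G \<kappa> e True = induced_orientation G \<kappa> e False"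
      by (auto simp: induced_orientation_def sgnmul_def)
  qed (auto simp: induced_orientation_def fun_eq_iff)
next
  assume "\<exists>vs es. is_cycle G (induced_orientation G \<kappa>) vs es"
  then obtain vs es where cycle: "is_cycle G (induced_orientation G \<kappa>) vs es" by blast
  hence walk: "closed_walk G vs es" by (simp add: is_cycle_def)
  hence "set vs \<noteq> {}" by (auto simp: closed_walk_def)
  define M where "M = Max ((\<lambda>v. \<bar>\<kappa> v\<bar>) ` set vs)"
  have "M \<in> (\<lambda>v. \<bar>\<kappa> v\<bar>) ` set vs"
    unfolding M_def using \<open>set vs \<noteq> {}\<close> by (intro Max_in) auto
  then obtain w where w: "w \<in> set vs" "\<bar>\<kappa> w\<bar> = M" by auto
  have bound: "\<bar>\<kappa> (endp G e h)\<bar> \<le> M" if "e \<in> set es" for e h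
    using closed_walk_endp[OF walk that] by (simp add: M_def)
  obtain e1 h1 where e1: "e1 \<in> set es" "endp G e1 h1 = w" "induced_orientation G \<kappa> e1 h1"
    using cycle w(1) by (auto simp: is_cycle_def)
  obtain e2 h2 where e2: "e2 \<in> set es" "endp G e2 h2 = w" "\<not> induced_orientation G \<kappa> e2 h2"
    using cycle w(1) by (auto simp: is_cycle_def)
  have "e2 \<in> edges G" using walk e2(1) by (auto simp: closed_walk_def)
  hence "\<kappa> w \<noteq> sgnmul G e2 (\<kappa> (endp G e2 (\<not> h2)))"
    using assms e2(2) by (cases h2) (auto simp: proper_def sgnmul_def)
  hence "\<kappa> w < M" "- M < \<kappa> w"
    using e1 e2 bound[OF e1(1), of "\<not> h1"] bound[OF e2(1), of "\<not> h2"] \<open>e2 \<in> edges G\<close>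
    by (auto simp: induced_orientation_def abs_le_iff sgnmul_def split: if_splits)
  thus False using w(2) by auto
qed

lemma preserves_iff_induced_orientation:
  assumes "is_orientation G om"
  shows "preserves G om \<kappa> \<longleftrightarrow> om = induced_orientation G \<kappa>"
  using assms
  by (auto simp: fun_eq_iff preserves_def is_orientation_def induced_orientation_def)

lemma finite_acyclic_orientations:
  assumes "wf_sgraph G"
  shows "finite {om. acyclic_orientation G om}"
proof (rule finite_subset)
  show "{om. acyclic_orientation G om} \<subseteq>
      {om. \<forall>e. (e \<in> edges G \<longrightarrow> om e \<in> UNIV) \<and> (e \<notin> edges G \<longrightarrow> om e = (\<lambda>_. False))}"
    by (auto simp: acyclic_orientation_def is_orientation_def)
  show "finite \<dots>"
    using assms by (intro finite_set_of_finite_funs) (simp_all add: wf_sgraph_def)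
qed

lemma Xfun_eq_sum_Yfun:
  assumes wf: "wf_sgraph G"
  shows "Xfun G m = (\<Sum>om\<in>{om. acyclic_orientation G om}. Yfun G om m)"
proof -
  let ?AO = "{om. acyclic_orientation G om}"
  let ?Y = "\<lambda>om. {\<kappa>. proper G \<kappa> \<and> preserves G om \<kappa> \<and> monomial_of G \<kappa> = m}"
  have finite: "finite {\<kappa>. proper G \<kappa> \<and> monomial_of G \<kappa> = m}"
    by (rule finite_subset[OF _ finite_proper_colorings_with_values[OF wf, of "set_mset m"]]) auto
  have "{\<kappa>. proper G \<kappa> \<and> monomial_of G \<kappa> = m} = (\<Union>om\<in>?AO. ?Y om)"
  proof (intro equalityI subsetI)
    fix \<kappa> assume "\<kappa> \<in> {\<kappa>. proper G \<kappa> \<and> monomial_of G \<kappa> = m}"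
    moreover from this have "induced_orientation G \<kappa> \<in> ?AO"
      by (simp add: induced_orientation_acyclic)
    ultimately show "\<kappa> \<in> (\<Union>om\<in>?AO. ?Y om)"
      by (auto simp: acyclic_orientation_def preserves_iff_induced_orientation)
  qed auto
  moreover have "card (\<Union>om\<in>?AO. ?Y om) = (\<Sum>om\<in>?AO. card (?Y om))"
  proof (rule card_UN_disjoint[OF finite_acyclic_orientations[OF wf]])
    show "\<forall>om\<in>?AO. finite (?Y om)"
      using finite by (auto intro: finite_subset[rotated])
    show "\<forall>om1\<in>?AO. \<forall>om2\<in>?AO. om1 \<noteq> om2 \<longrightarrow> ?Y om1 \<inter> ?Y om2 = {}"
      by (auto simp: acyclic_orientation_def preserves_iff_induced_orientation)
  qed
  ultimately show ?thesis by (simp add: Xfun_def Yfun_def)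
qed

section \<open>Relabelling vertices and edges\<close>

definition relabel :: "('v \<Rightarrow> 'w) \<Rightarrow> ('e \<Rightarrow> 'f) \<Rightarrow> ('v, 'e) sgraph \<Rightarrow> ('w, 'f) sgraph" where
  "relabel f g G = \<lparr>verts = f ` verts G, edges = g ` edges G,
     ends = (\<lambda>e'. map_prod f f (ends G (inv_into (edges G) g e'))),
     pos = (\<lambda>e'. pos G (inv_into (edges G) g e'))\<rparr>"

definition relabel_orientation :: "('e \<Rightarrow> 'f) \<Rightarrow> ('v, 'e) sgraph \<Rightarrow> ('e \<Rightarrow> bool \<Rightarrow> bool) \<Rightarrow> 'f \<Rightarrow> bool \<Rightarrow> bool" where
  "relabel_orientation g G om e' h \<longleftrightarrow> e' \<in> g ` edges G \<and> om (inv_into (edges G) g e') h"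

lemma relabel_simps:
  shows "verts (relabel f g G) = f ` verts G" "edges (relabel f g G) = g ` edges G"
    and "endp (relabel f g G) e' h = f (endp G (inv_into (edges G) g e') h)"
    and "sgnmul (relabel f g G) e' x = sgnmul G (inv_into (edges G) g e') x"
  by (simp_all add: relabel_def endp_def sgnmul_def)

lemma relabel_edge_simps:
  assumes "inj_on g (edges G)" "e \<in> edges G"
  shows "ends (relabel f g G) (g e) = map_prod f f (ends G e)"
    and "pos (relabel f g G) (g e) = pos G e"
    and "endp (relabel f g G) (g e) h = f (endp G e h)"
    and "sgnmul (relabel f g G) (g e) x = sgnmul G e x"
    and "relabel_orientation g G om (g e) = om e"
  using assms by (simp_all add: relabel_def relabel_orientation_def endp_def sgnmul_def fun_eq_iff)

lemma wf_relabel: "wf_sgraph G \<Longrightarrow> wf_sgraph (relabel f g G)"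
  by (auto simp: wf_sgraph_def relabel_def inv_into_into)

lemma relabel_endp_inverse:
  assumes "wf_sgraph G" "inj_on f (verts G)" "e' \<in> g ` edges G"
  shows "inv_into (verts G) f (endp (relabel f g G) e' h) = endp G (inv_into (edges G) g e') h"
proof -
  have "endp G (inv_into (edges G) g e') h \<in> verts G"
    using assms(1) inv_into_into[OF assms(3)] by (cases h) (auto simp: wf_sgraph_def)
  thus ?thesis using assms(2) by (simp add: relabel_simps)
qed

lemma relabel_closed_walk:
  assumes wf: "wf_sgraph G" and f: "inj_on f (verts G)" and walk: "closed_walk (relabel f g G) vs es"
  shows "closed_walk G (map (inv_into (verts G) f) vs) (map (inv_into (edges G) g) es)"
  unfolding closed_walk_def
proof (intro conjI allI impI)
  let ?H = "relabel f g G" and ?fi = "inv_into (verts G) f" and ?gi = "inv_into (edges G) g"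
  have es: "set es \<subseteq> g ` edges G" using walk by (simp add: closed_walk_def relabel_simps)
  fix i assume "i < length (map ?gi es)"
  hence i: "i < length es" by simp
  let ?j = "Suc i mod length es"
  have j: "?j < length es" using i by (intro mod_less_divisor) linarith
  have "ends ?H (es ! i) = (vs ! i, vs ! ?j) \<or> ends ?H (es ! i) = (vs ! ?j, vs ! i)"
    using walk i by (simp add: closed_walk_def)
  hence "endp ?H (es ! i) True = vs ! i \<and> endp ?H (es ! i) False = vs ! ?j \<or>
      endp ?H (es ! i) True = vs ! ?j \<and> endp ?H (es ! i) False = vs ! i"
    by auto
  moreover have "es ! i \<in> g ` edges G" using es i by auto
  hence "?fi (endp ?H (es ! i) h) = endp G (?gi (es ! i)) h" for h
    by (rule relabel_endp_inverse[OF wf f])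
  ultimately have "endp G (?gi (es ! i)) True = ?fi (vs ! i) \<and> endp G (?gi (es ! i)) False = ?fi (vs ! ?j) \<or>
      endp G (?gi (es ! i)) True = ?fi (vs ! ?j) \<and> endp G (?gi (es ! i)) False = ?fi (vs ! i)"
    by metis
  moreover have "length vs = length es" using walk by (simp add: closed_walk_def)
  ultimately show "ends G (map ?gi es ! i) = (map ?fi vs ! i, map ?fi vs ! (Suc i mod length (map ?gi es))) \<or>
      ends G (map ?gi es ! i) = (map ?fi vs ! (Suc i mod length (map ?gi es)), map ?fi vs ! i)"
    using i j by (auto simp: prod_eq_iff)
qed (use walk in \<open>auto simp: closed_walk_def relabel_simps intro: inv_into_into\<close>)

lemma relabel_cycle:
  assumes wf: "wf_sgraph G" and f: "inj_on f (verts G)" and g: "inj_on g (edges G)"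
    and cycle: "is_cycle (relabel f g G) (relabel_orientation g G om) vs es"
  shows "is_cycle G om (map (inv_into (verts G) f) vs) (map (inv_into (edges G) g) es)"
proof -
  let ?H = "relabel f g G" and ?fi = "inv_into (verts G) f" and ?gi = "inv_into (edges G) g"
  have walk: "closed_walk ?H vs es" using cycle by (simp add: is_cycle_def)
  have es: "e' \<in> g ` edges G" if "e' \<in> set es" for e'
    using walk that by (auto simp: closed_walk_def relabel_simps)
  have transfer: "\<exists>e\<in>set (map ?gi es). \<exists>h. endp G e h = ?fi x \<and> om e h = b"
    if "\<exists>e'\<in>set es. \<exists>h. endp ?H e' h = x \<and> relabel_orientation g G om e' h = b" for x b
  proof -
    from that obtain e' h where e': "e' \<in> set es" "endp ?H e' h = x" "relabel_orientation g G om e' h = b"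
      by blast
    have "endp G (?gi e') h = ?fi x"
      using relabel_endp_inverse[OF wf f es[OF e'(1)], of h] unfolding e'(2) by (rule sym)
    moreover have "om (?gi e') h = b" using e'(3) es[OF e'(1)] by (simp add: relabel_orientation_def)
    moreover have "?gi e' \<in> set (map ?gi es)" using e'(1) by simp
    ultimately show ?thesis by blast
  qed
  have arrows: "\<exists>e\<in>set (map ?gi es). \<exists>h. endp G e h = ?fi x \<and> om e h = b"
    if "x \<in> set vs" for x b
    using cycle that by (intro transfer) (cases b; auto simp: is_cycle_def)
  show ?thesis
    unfolding is_cycle_def
  proof (intro conjI ballI relabel_closed_walk[OF wf f walk])
    fix w assume "w \<in> set (map ?fi vs)"
    then obtain x where "x \<in> set vs" "w = ?fi x" by auto
    thus "\<exists>e\<in>set (map ?gi es). \<exists>h. endp G e h = w \<and> om e h"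
      and "\<exists>e\<in>set (map ?gi es). \<exists>h. endp G e h = w \<and> \<not> om e h"
      using arrows[of x True] arrows[of x False] by auto
  qed
qed

lemma signed_poset_relabel:
  assumes wf: "wf_sgraph G" and f: "inj_on f (verts G)" and g: "inj_on g (edges G)"
    and ac: "acyclic_orientation G om"
  shows "signed_poset (relabel f g G) (relabel_orientation g G om)"
proof -
  have "is_orientation (relabel f g G) (relabel_orientation g G om)"
    using ac g
    by (auto simp: is_orientation_def acyclic_orientation_def relabel_simps relabel_edge_simps)
      (auto simp: relabel_orientation_def)
  thus ?thesis
    using ac relabel_cycle[OF wf f g] wf_relabel[OF wf]
    by (fastforce simp: signed_poset_def acyclic_orientation_def)
qed

lemma relabel_coloring:
  assumes wf: "wf_sgraph G" and f: "inj_on f (verts G)" and g: "inj_on g (edges G)"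
    and zero: "\<And>v. v \<notin> verts G \<Longrightarrow> \<kappa> v = 0" and zero': "\<And>x. x \<notin> f ` verts G \<Longrightarrow> \<kappa>' x = 0"
    and agree: "\<And>v. v \<in> verts G \<Longrightarrow> \<kappa>' (f v) = \<kappa> v"
  shows "proper (relabel f g G) \<kappa>' \<longleftrightarrow> proper G \<kappa>"
    and "preserves (relabel f g G) (relabel_orientation g G om) \<kappa>' \<longleftrightarrow> preserves G om \<kappa>"
    and "monomial_of (relabel f g G) \<kappa>' = monomial_of G \<kappa>"
proof -
  have endp: "\<kappa>' (endp (relabel f g G) (g e) h) = \<kappa> (endp G e h)" if "e \<in> edges G" for e h
    using that wf agree by (cases h) (auto simp: relabel_edge_simps[OF g] wf_sgraph_def)
  show "proper (relabel f g G) \<kappa>' \<longleftrightarrow> proper G \<kappa>"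
    using endp[of _ True] endp[of _ False] zero zero'
    by (auto simp: proper_def relabel_simps relabel_edge_simps[OF g] inv_into_f_f[OF g])
  show "preserves (relabel f g G) (relabel_orientation g G om) \<kappa>' \<longleftrightarrow> preserves G om \<kappa>"
    using endp by (auto simp: preserves_def relabel_simps relabel_edge_simps[OF g] inv_into_f_f[OF g])
  have "monomial_of (relabel f g G) \<kappa>' = image_mset (\<kappa>' \<circ> f) (mset_set (verts G))"
    by (simp add: monomial_of_def relabel_simps image_mset_mset_set[OF f, symmetric] multiset.map_comp)
  also have "\<dots> = monomial_of G \<kappa>"
    using agree wf by (auto simp: monomial_of_def wf_sgraph_def intro: image_mset_cong)
  finally show "monomial_of (relabel f g G) \<kappa>' = monomial_of G \<kappa>" .
qed

lemma Yfun_relabel: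
  assumes wf: "wf_sgraph G" and f: "inj_on f (verts G)" and g: "inj_on g (edges G)"
  shows "Yfun (relabel f g G) (relabel_orientation g G om) = Yfun G om"
proof
  fix m
  let ?H = "relabel f g G" and ?om = "relabel_orientation g G om" and ?V = "verts G"
  let ?Y = "{\<kappa>. proper G \<kappa> \<and> preserves G om \<kappa> \<and> monomial_of G \<kappa> = m}"
  let ?Y' = "{\<kappa>. proper ?H \<kappa> \<and> preserves ?H ?om \<kappa> \<and> monomial_of ?H \<kappa> = m}"
  define push where "push \<kappa> x = (if x \<in> f ` ?V then \<kappa> (inv_into ?V f x) else 0)" for \<kappa> :: "'a \<Rightarrow> int" and x
  define pull where "pull \<kappa>' v = (if v \<in> ?V then \<kappa>' (f v) else 0)" for \<kappa>' :: "'c \<Rightarrow> int" and v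
  have "bij_betw push ?Y ?Y'"
  proof (rule bij_betw_byWitness[where f' = pull])
    show "\<forall>\<kappa>\<in>?Y. pull (push \<kappa>) = \<kappa>"
      using f by (auto simp: fun_eq_iff push_def pull_def proper_def)
    show "\<forall>\<kappa>'\<in>?Y'. push (pull \<kappa>') = \<kappa>'"
      using f by (auto simp: fun_eq_iff push_def pull_def proper_def relabel_simps f_inv_into_f inv_into_into)
    show "push ` ?Y \<subseteq> ?Y'"
    proof (rule image_subsetI)
      fix \<kappa> assume "\<kappa> \<in> ?Y"
      hence \<kappa>: "proper G \<kappa>" "preserves G om \<kappa>" "monomial_of G \<kappa> = m" by auto
      have "\<And>v. v \<notin> ?V \<Longrightarrow> \<kappa> v = 0" using \<kappa>(1) by (simp add: proper_def)
      moreover have "\<And>x. x \<notin> f ` ?V \<Longrightarrow> push \<kappa> x = 0" by (simp add: push_def)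
      moreover have "\<And>v. v \<in> ?V \<Longrightarrow> push \<kappa> (f v) = \<kappa> v" using f by (simp add: push_def)
      ultimately show "push \<kappa> \<in> ?Y'"
        using relabel_coloring[OF wf f g, where \<kappa> = \<kappa> and \<kappa>' = "push \<kappa>"] \<kappa> by simp
    qed
    show "pull ` ?Y' \<subseteq> ?Y"
    proof (rule image_subsetI)
      fix \<kappa>' assume "\<kappa>' \<in> ?Y'"
      hence \<kappa>': "proper ?H \<kappa>'" "preserves ?H ?om \<kappa>'" "monomial_of ?H \<kappa>' = m" by auto
      have "\<And>x. x \<notin> f ` ?V \<Longrightarrow> \<kappa>' x = 0" using \<kappa>'(1) by (simp add: proper_def relabel_simps)
      moreover have "\<And>v. v \<notin> ?V \<Longrightarrow> pull \<kappa>' v = 0" by (simp add: pull_def)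
      moreover have "\<And>v. v \<in> ?V \<Longrightarrow> \<kappa>' (f v) = pull \<kappa>' v" by (simp add: pull_def)
      ultimately show "pull \<kappa>' \<in> ?Y"
        using relabel_coloring[OF wf f g, where \<kappa> = "pull \<kappa>'" and \<kappa>' = \<kappa>'] \<kappa>' by simp
    qed
  qed
  thus "Yfun ?H ?om m = Yfun G om m"
    by (simp add: Yfun_def bij_betw_same_card)
qed

lemma exists_nat_signed_poset:
  fixes G :: "('v, 'e) sgraph"
  assumes wf: "wf_sgraph G" and ac: "acyclic_orientation G om"
  shows "\<exists>(H :: (nat, nat) sgraph) om'. signed_poset H om' \<and> Yfun H om' = Yfun G om"
proof -
  obtain f :: "'v \<Rightarrow> nat" where f: "inj_on f (verts G)"
    using finite_imp_inj_to_nat_seg[of "verts G"] wf by (auto simp: wf_sgraph_def)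
  obtain g :: "'e \<Rightarrow> nat" where g: "inj_on g (edges G)"
    using finite_imp_inj_to_nat_seg[of "edges G"] wf by (auto simp: wf_sgraph_def)
  show ?thesis
    using signed_poset_relabel[OF wf f g ac] Yfun_relabel[OF wf f g] by blast
qed

section \<open>Representations of X and the value of phi\<close>

lemma Xfun_rep_exists:
  assumes wf: "wf_sgraph G"
  shows "\<exists>reps. is_rep (Xfun G) reps"
proof -
  let ?AO = "{om. acyclic_orientation G om}"
  let ?copy_of = "\<lambda>om (p :: (nat, nat) sgraph \<times> (nat \<Rightarrow> bool \<Rightarrow> bool)).
    signed_poset (fst p) (snd p) \<and> Yfun (fst p) (snd p) = Yfun G om"
  define copy where "copy om = (SOME p. ?copy_of om p)" for om
  have copy: "?copy_of om (copy om)" if om: "om \<in> ?AO" for om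
  proof -
    obtain H :: "(nat, nat) sgraph" and om' where "signed_poset H om'" "Yfun H om' = Yfun G om"
      using exists_nat_signed_poset[OF wf] om by blast
    hence "?copy_of om (H, om')" by simp
    thus ?thesis unfolding copy_def by (rule someI)
  qed
  obtain oms where oms: "set oms = ?AO" "distinct oms"
    using finite_distinct_list[OF finite_acyclic_orientations[OF wf]] by blast
  have "is_rep (Xfun G) (map (\<lambda>om. (1, copy om)) oms)"
    unfolding is_rep_def
  proof (intro conjI ballI ext)
    fix t assume "t \<in> set (map (\<lambda>om. (1, copy om)) oms)"
    then obtain om where "om \<in> ?AO" "t = (1, copy om)" using oms(1) by auto
    thus "case t of (c, H, om') \<Rightarrow> signed_poset H om'"
      using copy by (simp add: split_def)
  next
    fix m
    have "(\<Sum>(c, H, om')\<leftarrow>map (\<lambda>om. (1, copy om)) oms. c * Yfun H om' m) =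
        (\<Sum>om\<leftarrow>oms. Yfun (fst (copy om)) (snd (copy om)) m)"
      by (simp add: comp_def split_def)
    also have "\<dots> = (\<Sum>om\<leftarrow>oms. Yfun G om m)"
      using copy oms(1) by (intro arg_cong[where f = sum_list] map_cong) auto
    also have "\<dots> = Xfun G m"
      using oms by (simp add: sum_list_distinct_conv_sum_set Xfun_eq_sum_Yfun[OF wf])
    finally show "Xfun G m = (\<Sum>(c, H, om')\<leftarrow>map (\<lambda>om. (1, copy om)) oms. c * Yfun H om' m)" ..
  qed
  thus ?thesis by blast
qed

lemma Phi_sum: "Phi n (\<lambda>m. \<Sum>x\<in>A. h x m) = (\<Sum>x\<in>A. Phi n (h x))"
  by (simp add: Phi_def smult_sum sum.swap[of _ A])

lemma Phi_linear_combination: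
  "Phi n (\<lambda>m. \<Sum>x\<leftarrow>xs. c x * h x m) = (\<Sum>x\<leftarrow>xs. smult (c x) (Phi n (h x)))"
  by (induction xs) (simp_all add: Phi_def smult_add_left sum.distrib smult_sum_right)

lemma Phi_Xfun:
  assumes "wf_sgraph G"
  shows "Phi n (Xfun G) = (if n = card (verts G)
    then \<Sum>om\<in>{om. acyclic_orientation G om}. [:0, 1:] ^ card (sinks G om) else 0)"
proof -
  have "Xfun G = (\<lambda>m. \<Sum>om\<in>{om. acyclic_orientation G om}. Yfun G om m)"
    using Xfun_eq_sum_Yfun[OF assms] by blast
  thus ?thesis
    by (cases "n = card (verts G)") (simp_all add: Phi_sum Phi_Yfun[OF assms])
qed

lemma sum_reps_eq_Phi:
  assumes rep: "is_rep f reps" and N: "\<And>c H om. (c, H, om) \<in> set reps \<Longrightarrow> card (verts H) \<le> N"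
  shows "(\<Sum>(c, H, om)\<leftarrow>reps. monom c (card (sinks H om))) = (\<Sum>n\<le>N. Phi n f)"
proof -
  have "monom c (card (sinks H om)) = (\<Sum>n\<le>N. smult c (Phi n (Yfun H om)))"
    if "(c, H, om) \<in> set reps" for c H om
  proof -
    have "signed_poset H om" using rep that by (auto simp: is_rep_def)
    hence "smult c (Phi n (Yfun H om)) =
        (if n = card (verts H) then monom c (card (sinks H om)) else 0)" for n
      by (simp add: signed_poset_def Phi_Yfun monom_altdef)
    thus ?thesis
      using N[OF that] by (simp add: sum.delta)
  qed
  hence "(\<Sum>(c, H, om)\<leftarrow>reps. monom c (card (sinks H om))) =
      (\<Sum>(c, H, om)\<leftarrow>reps. \<Sum>n\<le>N. smult c (Phi n (Yfun H om)))"
    by (auto simp: split_def intro!: arg_cong[where f = sum_list])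
  also have "\<dots> = (\<Sum>n\<le>N. \<Sum>(c, H, om)\<leftarrow>reps. smult c (Phi n (Yfun H om)))"
    by (induction reps) (simp_all add: sum.distrib split_def)
  also have "\<dots> = (\<Sum>n\<le>N. Phi n f)"
    using rep by (simp add: is_rep_def split_def Phi_linear_combination)
  finally show ?thesis .
qed

lemma sum_sinks_eq_acyc:
  assumes "wf_sgraph G"
  shows "(\<Sum>om\<in>{om. acyclic_orientation G om}. [:0, 1:] ^ card (sinks G om)) =
    (\<Sum>k\<le>card (verts G). monom (of_nat (acyc G k)) k)"
proof -
  let ?AO = "{om. acyclic_orientation G om}"
  have "finite (verts G)" using assms by (simp add: wf_sgraph_def)
  hence "(\<lambda>om. card (sinks G om)) ` ?AO \<subseteq> {..card (verts G)}"
    by (auto simp: sinks_def intro!: card_mono)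
  hence "(\<Sum>om\<in>?AO. [:0, 1:] ^ card (sinks G om)) =
      (\<Sum>k\<le>card (verts G). \<Sum>om\<in>{om\<in>?AO. card (sinks G om) = k}. [:0, 1:] ^ card (sinks G om))"
    by (intro sum.group[symmetric] finite_acyclic_orientations assms) auto
  also have "\<dots> = (\<Sum>k\<le>card (verts G). \<Sum>om\<in>{om\<in>?AO. card (sinks G om) = k}. [:0, 1:] ^ k)"
    by (intro sum.cong refl) auto
  also have "\<dots> = (\<Sum>k\<le>card (verts G). monom (of_nat (acyc G k)) k)"
    by (simp add: acyc_def monom_altdef of_nat_mult_conv_smult)
  finally show ?thesis .
qed

lemma Xfun_rep_value:
  assumes wf: "wf_sgraph G" and rep: "is_rep (Xfun G) reps"
  shows "(\<Sum>(c, H, om)\<leftarrow>reps. monom c (card (sinks H om))) =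
    (\<Sum>k\<le>card (verts G). monom (of_nat (acyc G k)) k)"
proof -
  define N where "N = card (verts G) + (\<Sum>(c, H, om)\<leftarrow>reps. card (verts H))"
  have "card (verts H) \<le> N" if "(c, H, om) \<in> set reps" for c H om
    using member_le_sum_list[of "card (verts H)" "map (\<lambda>(c, H, om). card (verts H)) reps"] that
    by (force simp: N_def)
  hence "(\<Sum>(c, H, om)\<leftarrow>reps. monom c (card (sinks H om))) = (\<Sum>n\<le>N. Phi n (Xfun G))"
    by (rule sum_reps_eq_Phi[OF rep])
  also have "\<dots> = (\<Sum>om\<in>{om. acyclic_orientation G om}. [:0, 1:] ^ card (sinks G om))"
    by (simp add: Phi_Xfun[OF wf] sum.delta N_def)
  also have "\<dots> = (\<Sum>k\<le>card (verts G). monom (of_nat (acyc G k)) k)"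
    by (rule sum_sinks_eq_acyc[OF wf])
  finally show ?thesis .
qed

theorem theorem6p1:
  fixes G :: "('v, 'e) sgraph"
  assumes "wf_sgraph G"
  shows "Xfun G \<in> YY \<and>
         phi (Xfun G) = (\<Sum>k\<le>card (verts G). monom (of_nat (acyc G k)) k)"
proof
  obtain reps where rep: "is_rep (Xfun G) reps"
    using Xfun_rep_exists[OF assms] by blast
  thus "Xfun G \<in> YY" by (auto simp: YY_def)
  show "phi (Xfun G) = (\<Sum>k\<le>card (verts G). monom (of_nat (acyc G k)) k)"
    unfolding phi_def
  proof (rule the_equality)
    show "\<forall>reps. is_rep (Xfun G) reps \<longrightarrow> (\<Sum>k\<le>card (verts G). monom (of_nat (acyc G k)) k) =
        (\<Sum>(c, H, om)\<leftarrow>reps. monom c (card (sinks H om)))"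
      using Xfun_rep_value[OF assms] by simp
    fix q assume "\<forall>reps. is_rep (Xfun G) reps \<longrightarrow> q = (\<Sum>(c, H, om)\<leftarrow>reps. monom c (card (sinks H om)))"
    thus "q = (\<Sum>k\<le>card (verts G). monom (of_nat (acyc G k)) k)"
      using rep Xfun_rep_value[OF assms rep] by simp
  qed
qed

end
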